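(* Let $A\in\mathbb{R}^{m\times n}$ have rank $r$. (1) Consider the linear program in the variables $H^+,H^-\in\mathbb{R}^{n\times m}$: minimize $\sum_{i,j}(H^+_{ij}+H^-_{ij})$ subject to $AHA=A$, $(AH)^\top=AH$, $H^+\ge 0$, $H^-\ge0$, where $H:=H^+-H^-$. For every extreme point $(H^+,H^-)$ of its feasible region, $H=H^+-H^-$ has at most $mr$ nonzero entries. Moreover this bound is sharp for all $m\ge n\ge r\ge 1$: for such $m,n,r$ there is an $m\times n$ matrix $A$ of rank $r$ for which some extreme solution $H$ has exactly $mr$ nonzero entries. (2) Consider the linear program in the variables $H^+,H^-\in\mathbb{R}^{n\times m}$: minimize $\sum_{i,j}(H^+_{ij}+H^-_{ij})$ subject to $AHA=A$, $(AH)^\top=AH$, $HAA^+=H$, $H^+\ge 0$, $H^-\ge0$, where $H:=H^+-H^-$ and $A^+$ is the Moore–Penrose pseudoinverse of $A$ (this is the linear program for minimizing $\|H\|_1$ subject to $AHA=A$, $HAH=H$, $(AH)^\top=AH$, since under the first and third conditions $HAH=H$ is equivalent to $HAA^+=H$). For every extreme point $(H^+,H^-)$ of its feasible region, $H=H^+-H^-$ has at most $mr+(m-r)(n-r)$ nonzero entries.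
   Context: $\|H\|_1=\sum_{i,j}|H_{ij}|$; inequalities $H^{\pm}\ge0$ are entrywise. $A^+$ denotes the Moore–Penrose pseudoinverse of $A$. *)

theory Defs
  imports "Jordan_Normal_Form.DL_Rank"
begin

definition mrank :: "real mat \<Rightarrow> nat" where
  "mrank A = vec_space.rank (dim_row A) A"

definition pinv :: "real mat \<Rightarrow> real mat" where
  "pinv A = (THE X. X \<in> carrier_mat (dim_col A) (dim_row A) \<and>
      A * X * A = A \<and> X * A * X = X \<and>
      transpose_mat (A * X) = A * X \<and> transpose_mat (X * A) = X * A)"

definition nnz :: "real mat \<Rightarrow> nat" where
  "nnz H = card {(i, j). i < dim_row H \<and> j < dim_col H \<and> H $$ (i, j) \<noteq> 0}"

definition nonneg_mat :: "real mat \<Rightarrow> bool" where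
  "nonneg_mat H \<longleftrightarrow> (\<forall>i < dim_row H. \<forall>j < dim_col H. H $$ (i, j) \<ge> 0)"

definition feasible1 :: "real mat \<Rightarrow> (real mat \<times> real mat) set" where
  "feasible1 A = {(Hp, Hm). Hp \<in> carrier_mat (dim_col A) (dim_row A) \<and>
      Hm \<in> carrier_mat (dim_col A) (dim_row A) \<and>
      A * (Hp - Hm) * A = A \<and>
      transpose_mat (A * (Hp - Hm)) = A * (Hp - Hm) \<and>
      nonneg_mat Hp \<and> nonneg_mat Hm}"

definition feasible2 :: "real mat \<Rightarrow> (real mat \<times> real mat) set" where
  "feasible2 A = {(Hp, Hm). (Hp, Hm) \<in> feasible1 A \<and>
      (Hp - Hm) * A * pinv A = Hp - Hm}"

definition extreme_pt :: "(real mat \<times> real mat) set \<Rightarrow> real mat \<times> real mat \<Rightarrow> bool" where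
  "extreme_pt S x \<longleftrightarrow> x \<in> S \<and>
     (\<forall>y\<in>S. \<forall>z\<in>S. \<forall>t::real. 0 < t \<and> t < 1 \<and>
        fst x = t \<cdot>\<^sub>m fst y + (1 - t) \<cdot>\<^sub>m fst z \<and>
        snd x = t \<cdot>\<^sub>m snd y + (1 - t) \<cdot>\<^sub>m snd z \<longrightarrow> y = z)"

end

theory Submission
  imports Defs
begin

text \<open>
  Let \<open>(H+, H-)\<close> be an extreme point and \<open>H = H+ - H-\<close>. If \<open>D \<noteq> 0\<close> satisfies \<open>A D = 0\<close> and
  vanishes outside the support of \<open>(H+, H-)\<close>, then splitting \<open>D\<close> between \<open>H+\<close> and \<open>H-\<close> gives
  feasible points \<open>(H+, H-) \<plusminus> e (D+, D-)\<close> for small \<open>e > 0\<close>, since \<open>A (H + e D) = A H\<close>; this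
  contradicts extremality as soon as such directions also respect the remaining constraints.
  So a \<open>d\<close>-dimensional space of admissible directions meets the matrices supported on the
  support of \<open>H\<close> only in \<open>0\<close>, whence \<open>nnz H \<le> n m - d\<close>. For LP (1) every \<open>D\<close> with \<open>A D = 0\<close> is
  admissible, \<open>d = (n - r) m\<close>, and the bound is \<open>m r\<close>. For LP (2) the directions \<open>w a\<^sup>T\<close>, with
  \<open>A w = 0\<close> and \<open>a\<close> a column of \<open>A\<close>, also satisfy \<open>D A A\<^sup>+ = D\<close>; here \<open>d = (n - r) r\<close> and
  \<open>n m - (n - r) r = m r + (m - r) (n - r)\<close>.

  For sharpness take \<open>A = [U | u\<^sub>1 \<dots> u\<^sub>1]\<close> with \<open>U = [I; 0] + 1 1\<^sup>T\<close> of size \<open>m \<times> r\<close> and \<open>H = [U\<^sup>+; 0]\<close>: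
  no entry of \<open>U\<^sup>+\<close> vanishes, and \<open>H\<close> is extreme because an admissible \<open>D\<close> supported on the first
  \<open>r\<close> rows has \<open>(A D)\<^sup>2 = A D A D = 0\<close> with \<open>A D\<close> symmetric, so \<open>A D = 0\<close> and \<open>D = H A D = 0\<close>.
\<close>

section \<open>Linear algebra\<close>

lemma homogeneous_system_nontrivial_solution:
  fixes a :: "'x \<Rightarrow> 'j \<Rightarrow> 'a::field"
  assumes "finite T" "finite J" "card T < card J"
  shows "\<exists>c. (\<exists>j\<in>J. c j \<noteq> 0) \<and> (\<forall>x\<in>T. (\<Sum>j\<in>J. a x j * c j) = 0)"
  using assms
proof (induction T arbitrary: J a rule: finite_induct)
  case empty
  then obtain j0 where "j0 \<in> J" by fastforce
  then show ?case by (intro exI[of _ "\<lambda>_. 1"]) auto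
next
  case (insert x T)
  show ?case
  proof (cases "\<forall>j\<in>J. a x j = 0")
    case True
    then show ?thesis using insert.IH[of J a] insert.hyps insert.prems by auto
  next
    case False
    then obtain j0 where j0: "j0 \<in> J" "a x j0 \<noteq> 0" by blast
    define J' where "J' = J - {j0}"
    \<comment> \<open>Eliminate the unknown \<open>c j0\<close> using the equation of \<open>x\<close>.\<close>
    define a' where "a' = (\<lambda>y j. a y j - a y j0 * a x j / a x j0)"
    have J: "J = insert j0 J'" "j0 \<notin> J'" "finite J'" using j0 insert.prems by (auto simp: J'_def)
    have "card T < card J'" using j0 insert by (simp add: J'_def)
    then obtain c' where c': "\<exists>j\<in>J'. c' j \<noteq> 0" "\<forall>y\<in>T. (\<Sum>j\<in>J'. a' y j * c' j) = 0"
      using insert.IH[OF J(3)] by blast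
    define c where "c = c'(j0 := - (\<Sum>k\<in>J'. a x k * c' k) / a x j0)"
    have split: "(\<Sum>j\<in>J. a y j * c j) = a y j0 * c j0 + (\<Sum>j\<in>J'. a y j * c' j)" for y
      using J by (auto simp: c_def intro!: sum.cong)
    show ?thesis
    proof (intro exI[of _ c] conjI ballI)
      show "\<exists>j\<in>J. c j \<noteq> 0" using c'(1) J by (force simp: c_def)
      fix y assume y: "y \<in> insert x T"
      show "(\<Sum>j\<in>J. a y j * c j) = 0"
      proof (cases "y = x")
        case True
        then show ?thesis using split[of x] j0 by (simp add: c_def)
      next
        case False
        have "(\<Sum>j\<in>J'. a' y j * c' j)
            = (\<Sum>j\<in>J'. a y j * c' j) - a y j0 / a x j0 * (\<Sum>j\<in>J'. a x j * c' j)"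
          unfolding a'_def by (simp add: sum_subtractf sum_distrib_left algebra_simps)
        then show ?thesis using split[of y] c'(2) y False j0 by (simp add: c_def)
      qed
    qed
  qed
qed

lemma assoc_mult_mat_dim:
  fixes A B C :: "'a::comm_semiring_0 mat"
  shows "dim_col A = dim_row B \<Longrightarrow> dim_col B = dim_row C \<Longrightarrow> A * B * C = A * (B * C)"
  by (rule assoc_mult_mat[of A "dim_row A" "dim_col A" B "dim_col B" C "dim_col C"]) auto

lemma transpose_mult_dim:
  fixes A B :: "'a::comm_semiring_0 mat"
  shows "dim_col A = dim_row B \<Longrightarrow> transpose_mat (A * B) = transpose_mat B * transpose_mat A"
  by (rule transpose_mult[of A "dim_row A" "dim_col A" B "dim_col B"]) auto

lemma (in vec_space) maximal_lin_indpt_span: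
  assumes S: "S \<subseteq> carrier_vec n" and U: "maximal U (\<lambda>T. T \<subseteq> S \<and> lin_indpt T)" and v: "v \<in> S"
  shows "v \<in> span U"
proof -
  have US: "U \<subseteq> S" and ind: "lin_indpt U" using U unfolding maximal_def by auto
  then have UC: "U \<subseteq> carrier_vec n" using S by blast
  show ?thesis
  proof (cases "v \<in> U")
    case True
    then show ?thesis using in_own_span[OF UC] by blast
  next
    case False
    show ?thesis
    proof (rule ccontr)
      assume "v \<notin> span U"
      then have "lin_indpt (U \<union> {v})" using lin_dep_iff_in_span[OF UC ind _ False] S v by auto
      then have "U \<union> {v} = U" using U US v unfolding maximal_def by blast
      then show False using False by blast
    qed
  qed
qed

lemma (in vec_space) lin_indpt_cols_coeffs_eq_0:
  assumes A: "A \<in> carrier_mat n nc" and P: "P \<subseteq> {..<nc}" "inj_on (col A) P"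
    and ind: "lin_indpt (col A ` P)" and c: "\<forall>i<n. (\<Sum>p\<in>P. c p * A $$ (i, p)) = 0"
  shows "\<forall>p\<in>P. c p = 0"
proof (rule ccontr)
  assume "\<not> (\<forall>p\<in>P. c p = 0)"
  then obtain p where p: "p \<in> P" "c p \<noteq> 0" by blast
  have fin: "finite (col A ` P)" using P(1) by (simp add: finite_subset)
  have C: "col A ` P \<subseteq> carrier_vec n" using A P(1) by auto
  define a where "a u = c (the_inv_into P (col A) u)" for u
  have a: "a (col A q) = c q" if "q \<in> P" for q unfolding a_def using P(2) that by (simp add: the_inv_into_f_f)
  have lc: "lincomb a (col A ` P) = 0\<^sub>v n"
  proof (rule eq_vecI)
    fix i assume "i < dim_vec (0\<^sub>v n)"
    then have i: "i < n" by simp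
    have "col A q $ i = A $$ (i, q)" if "q \<in> P" for q using A i P(1) that by auto
    then have "lincomb a (col A ` P) $ i = (\<Sum>q\<in>P. c q * A $$ (i, q))"
      unfolding lincomb_index[OF i C] sum.reindex[OF P(2)] using a by simp
    then show "lincomb a (col A ` P) $ i = 0\<^sub>v n $ i" using c i by simp
  qed (use lincomb_dim[OF fin C] in simp)
  have "lin_dep (col A ` P)"
    by (rule lin_dep_crit[OF fin subset_refl _ imageI[OF p(1)]]) (use a[OF p(1)] p(2) lc in auto)
  then show False using ind by simp
qed

lemma (in vec_space) span_cols_coeffs:
  assumes A: "A \<in> carrier_mat n nc" and P: "P \<subseteq> {..<nc}" "inj_on (col A) P"
    and v: "v \<in> span (col A ` P)"
  shows "\<exists>co. \<forall>i<n. v $ i = (\<Sum>p\<in>P. co p * A $$ (i, p))"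
proof -
  obtain a B where aB: "v = lincomb a B" "finite B" "B \<subseteq> col A ` P" using in_spanE[OF v] by blast
  have fin: "finite (col A ` P)" using P(1) by (simp add: finite_subset)
  have C: "col A ` P \<subseteq> carrier_vec n" using A P(1) by auto
  define co where "co p = (if col A p \<in> B then a (col A p) else 0)" for p
  have "v $ i = (\<Sum>p\<in>P. co p * A $$ (i, p))" if i: "i < n" for i
  proof -
    have "v $ i = (\<Sum>u\<in>B. a u * u $ i)" unfolding aB(1) using lincomb_index[OF i] aB(3) C by blast
    also have "\<dots> = (\<Sum>u\<in>col A ` P. (if u \<in> B then a u else 0) * u $ i)"
      using aB(3) fin by (intro sum.mono_neutral_cong_left) auto
    also have "\<dots> = (\<Sum>p\<in>P. co p * A $$ (i, p))"
    proof -
      have "col A p $ i = A $$ (i, p)" if "p \<in> P" for p using A i P(1) that by auto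
      then show ?thesis unfolding sum.reindex[OF P(2)] co_def by simp
    qed
    finally show ?thesis .
  qed
  then show ?thesis by blast
qed

lemma column_basis_exists:
  fixes A :: "'a::field mat"
  assumes A: "A \<in> carrier_mat m n"
  obtains P co where "P \<subseteq> {..<n}" "card P = vec_space.rank m A"
    "\<And>c. \<forall>i<m. (\<Sum>p\<in>P. c p * A $$ (i, p)) = 0 \<Longrightarrow> \<forall>p\<in>P. c p = 0"
    "\<And>q i. q < n \<Longrightarrow> i < m \<Longrightarrow> A $$ (i, q) = (\<Sum>p\<in>P. co q p * A $$ (i, p))"
    "\<And>q p. q \<in> P \<Longrightarrow> co q p = (if p = q then 1 else 0)"
proof -
  interpret vec_space "TYPE('a)" m .
  have cols: "set (cols A) = col A ` {..<n}" using A by (auto simp: cols_def)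
  have colsC: "set (cols A) \<subseteq> carrier_vec m" using A cols_dim by blast
  obtain U where U: "maximal U (\<lambda>T. T \<subseteq> set (cols A) \<and> lin_indpt T)"
    using maximal_exists[of "\<lambda>T. T \<subseteq> set (cols A) \<and> lin_indpt T" "card (set (cols A))" "{}"]
    by (meson List.finite_set card_mono empty_iff empty_subsetI finite_lin_indpt2 rev_finite_subset)
  then have "U \<subseteq> col A ` {..<n}" unfolding maximal_def cols by blast
  then obtain P where P: "P \<subseteq> {..<n}" "inj_on (col A) P" and UP: "U = col A ` P"
    by (auto simp: subset_image_inj)
  have finP: "finite P" using P(1) by (simp add: finite_subset)
  have span: "\<exists>co. \<forall>i<m. A $$ (i, q) = (\<Sum>p\<in>P. co p * A $$ (i, p))" if q: "q < n" for q
  proof -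
    have "col A q \<in> span U" using maximal_lin_indpt_span[OF colsC U] q cols by blast
    then obtain co where "\<forall>i<m. col A q $ i = (\<Sum>p\<in>P. co p * A $$ (i, p))"
      using span_cols_coeffs[OF A P] unfolding UP by blast
    then show ?thesis using q A by auto
  qed
  define co where
    "co q = (if q \<in> P then (\<lambda>p. if p = q then 1 else 0)
             else (SOME co. \<forall>i<m. A $$ (i, q) = (\<Sum>p\<in>P. co p * A $$ (i, p))))" for q
  show thesis
  proof (rule that[of P co])
    show "P \<subseteq> {..<n}" by (fact P(1))
    show "card P = vec_space.rank m A"
      using rank_card_indpt[OF A U] card_image[OF P(2)] unfolding UP by simp
    show "\<forall>p\<in>P. c p = 0" if "\<forall>i<m. (\<Sum>p\<in>P. c p * A $$ (i, p)) = 0" for c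
      using lin_indpt_cols_coeffs_eq_0[OF A P _ that] U unfolding UP maximal_def by blast
    show "A $$ (i, q) = (\<Sum>p\<in>P. co q p * A $$ (i, p))" if q: "q < n" and i: "i < m" for q i
    proof (cases "q \<in> P")
      case True
      have "co q p * A $$ (i, p) = (if p = q then A $$ (i, p) else 0)" for p
        using True by (simp add: co_def)
      then show ?thesis using True finP by simp
    next
      case False
      have "A $$ (i, q) = (\<Sum>p\<in>P. (SOME co. \<forall>i<m. A $$ (i, q) = (\<Sum>p\<in>P. co p * A $$ (i, p))) p * A $$ (i, p))"
        using someI_ex[OF span[OF q]] i by blast
      with False show ?thesis unfolding co_def by simp
    qed
    show "co q p = (if p = q then 1 else 0)" if "q \<in> P" for q p
      using that by (simp add: co_def)
  qed
qed

lemma kernel_vectors_exist: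
  fixes A :: "'a::field mat"
  assumes A: "A \<in> carrier_mat m n"
  obtains P w where "P \<subseteq> {..<n}" "card P = vec_space.rank m A"
    "\<And>c. \<forall>i<m. (\<Sum>p\<in>P. c p * A $$ (i, p)) = 0 \<Longrightarrow> \<forall>p\<in>P. c p = 0"
    "\<And>q i. q < n \<Longrightarrow> i < m \<Longrightarrow> (\<Sum>k<n. A $$ (i, k) * w q k) = 0"
    "\<And>d. \<forall>k<n. (\<Sum>q\<in>{..<n} - P. d q * w q k) = 0 \<Longrightarrow> \<forall>q\<in>{..<n} - P. d q = 0"
proof -
  obtain P co where P: "P \<subseteq> {..<n}" "card P = vec_space.rank m A"
    "\<And>c. \<forall>i<m. (\<Sum>p\<in>P. c p * A $$ (i, p)) = 0 \<Longrightarrow> \<forall>p\<in>P. c p = 0"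
    and co: "\<And>q i. q < n \<Longrightarrow> i < m \<Longrightarrow> A $$ (i, q) = (\<Sum>p\<in>P. co q p * A $$ (i, p))"
    and "\<And>q p. q \<in> P \<Longrightarrow> co q p = (if p = q then 1 else 0)"
    by (rule column_basis_exists[OF A]) (rule that)
  define w where "w q k = (if k = q then 1 else 0) - (if k \<in> P then co q k else 0)" for q k
  show thesis
  proof (rule that[OF P])
    show "(\<Sum>k<n. A $$ (i, k) * w q k) = 0" if q: "q < n" and i: "i < m" for q i
    proof -
      have "(\<Sum>k<n. A $$ (i, k) * w q k)
          = (\<Sum>k<n. if k = q then A $$ (i, k) else 0) - (\<Sum>k<n. if k \<in> P then co q k * A $$ (i, k) else 0)"
        unfolding sum_subtractf[symmetric] by (rule sum.cong[OF refl]) (simp add: w_def algebra_simps)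
      also have "(\<Sum>k<n. if k \<in> P then co q k * A $$ (i, k) else 0) = (\<Sum>k\<in>{..<n} \<inter> P. co q k * A $$ (i, k))"
        by (simp add: sum.inter_restrict)
      also have "{..<n} \<inter> P = P" using P(1) by blast
      finally show ?thesis using co[OF q i] q by simp
    qed
    show "\<forall>q\<in>{..<n} - P. d q = 0" if d: "\<forall>k<n. (\<Sum>q\<in>{..<n} - P. d q * w q k) = 0" for d
    proof
      fix q0 assume q0: "q0 \<in> {..<n} - P"
      have "(\<Sum>q\<in>{..<n} - P. d q * w q q0) = (\<Sum>q\<in>{..<n} - P. if q = q0 then d q else 0)"
        using q0 by (intro sum.cong[OF refl]) (auto simp: w_def)
      then show "d q0 = 0" using d q0 by simp
    qed
  qed
qed

lemma transpose_mult_vec_unit_cols_eq_0: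
  fixes C :: "'a::comm_ring_1 mat"
  assumes C: "C \<in> carrier_mat r n" and ps: "\<And>l. l < r \<Longrightarrow> ps l < n"
    and unit: "\<And>k l. k < r \<Longrightarrow> l < r \<Longrightarrow> C $$ (k, ps l) = (if k = l then 1 else 0)"
    and v: "v \<in> carrier_vec r" "transpose_mat C *\<^sub>v v = 0\<^sub>v n"
  shows "v = 0\<^sub>v r"
proof (rule eq_vecI)
  fix l assume "l < dim_vec (0\<^sub>v r)"
  then have l: "l < r" by simp
  have "(transpose_mat C *\<^sub>v v) $ ps l = (\<Sum>k<r. C $$ (k, ps l) * v $ k)"
    using ps[OF l] v(1) C by (simp add: scalar_prod_def lessThan_atLeast0)
  also have "\<dots> = v $ l" using unit[OF _ l] l by (simp add: if_distrib[of "\<lambda>x. x * _"] cong: if_cong)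
  finally show "v $ l = 0\<^sub>v r $ l" using v ps[OF l] l by simp
qed (use v in simp)

lemma full_rank_factorization:
  fixes A :: "'a::field mat"
  assumes A: "A \<in> carrier_mat m n"
  obtains r B C where "B \<in> carrier_mat m r" "C \<in> carrier_mat r n" "A = B * C"
    "\<And>v. v \<in> carrier_vec r \<Longrightarrow> B *\<^sub>v v = 0\<^sub>v m \<Longrightarrow> v = 0\<^sub>v r"
    "\<And>v. v \<in> carrier_vec r \<Longrightarrow> transpose_mat C *\<^sub>v v = 0\<^sub>v n \<Longrightarrow> v = 0\<^sub>v r"
proof -
  obtain P co where P: "P \<subseteq> {..<n}" and "card P = vec_space.rank m A"
    and indP: "\<And>c. \<forall>i<m. (\<Sum>p\<in>P. c p * A $$ (i, p)) = 0 \<Longrightarrow> \<forall>p\<in>P. c p = 0"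
    and co: "\<And>q i. q < n \<Longrightarrow> i < m \<Longrightarrow> A $$ (i, q) = (\<Sum>p\<in>P. co q p * A $$ (i, p))"
    and co_P: "\<And>q p. q \<in> P \<Longrightarrow> co q p = (if p = q then 1 else 0)"
    by (rule column_basis_exists[OF A]) (rule that)
  have finP: "finite P" using P finite_subset by blast
  define ps where "ps = sorted_list_of_set P"
  define r where "r = length ps"
  have dps: "distinct ps" and sps: "set ps = P" unfolding ps_def using finP by auto
  have bij: "bij_betw ((!) ps) {..<r} P" using bij_betw_nth[OF dps] sps unfolding r_def by simp
  have psP: "ps ! k \<in> P" if "k < r" for k using that sps unfolding r_def by auto
  have psn: "ps ! k < n" if "k < r" for k using psP[OF that] P by auto
  have reindex: "(\<Sum>k<r. f (ps ! k)) = (\<Sum>p\<in>P. f p)" for f :: "nat \<Rightarrow> 'a"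
    using sum.reindex_bij_betw[OF bij, of f] .
  define B where "B = mat m r (\<lambda>(i, k). A $$ (i, ps ! k))"
  define C where "C = mat r n (\<lambda>(k, q). co q (ps ! k))"
  have Bc: "B \<in> carrier_mat m r" and Cc: "C \<in> carrier_mat r n" unfolding B_def C_def by auto
  have "A = B * C"
  proof (rule eq_matI)
    fix i q assume "i < dim_row (B * C)" "q < dim_col (B * C)"
    then have i: "i < m" and q: "q < n" using Bc Cc by auto
    have "(B * C) $$ (i, q) = (\<Sum>k<r. A $$ (i, ps ! k) * co q (ps ! k))"
      using i q Bc Cc by (simp add: B_def C_def scalar_prod_def lessThan_atLeast0)
    also have "\<dots> = (\<Sum>p\<in>P. co q p * A $$ (i, p))"
      using reindex[of "\<lambda>p. A $$ (i, p) * co q p"] by (simp add: mult.commute)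
    finally show "A $$ (i, q) = (B * C) $$ (i, q)" using co[OF q i] by simp
  qed (use A Bc Cc in auto)
  moreover have "v = 0\<^sub>v r" if v: "v \<in> carrier_vec r" and Bv: "B *\<^sub>v v = 0\<^sub>v m" for v
  proof -
    define c where "c p = v $ the_inv_into {..<r} ((!) ps) p" for p
    have c_ps: "c (ps ! k) = v $ k" if "k < r" for k
      unfolding c_def using the_inv_into_f_f[OF bij_betw_imp_inj_on[OF bij]] that by simp
    have "(\<Sum>p\<in>P. c p * A $$ (i, p)) = 0" if i: "i < m" for i
    proof -
      have "(\<Sum>p\<in>P. c p * A $$ (i, p)) = (\<Sum>k<r. v $ k * A $$ (i, ps ! k))"
        using reindex[of "\<lambda>p. c p * A $$ (i, p)"] c_ps by simp
      also have "\<dots> = (B *\<^sub>v v) $ i"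
        using i v Bc by (simp add: B_def scalar_prod_def lessThan_atLeast0 mult.commute)
      finally show ?thesis using Bv i by simp
    qed
    then have "\<forall>p\<in>P. c p = 0" using indP by blast
    then show ?thesis using v c_ps psP by (intro eq_vecI) auto
  qed
  moreover have "v = 0\<^sub>v r" if "v \<in> carrier_vec r" "transpose_mat C *\<^sub>v v = 0\<^sub>v n" for v
  proof (rule transpose_mult_vec_unit_cols_eq_0[OF Cc psn _ that])
    fix k l assume "k < r" "l < r"
    then have "ps ! k = ps ! l \<longleftrightarrow> k = l" using nth_eq_iff_index_eq[OF dps] unfolding r_def by auto
    then show "C $$ (k, ps ! l) = (if k = l then 1 else 0)"
      using co_P[OF psP[OF \<open>l < r\<close>]] \<open>k < r\<close> psn[OF \<open>l < r\<close>] by (auto simp: C_def)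
  qed
  ultimately show thesis using that Bc Cc by blast
qed

section \<open>The Moore--Penrose pseudoinverse\<close>

lemma gram_mat_symmetric_inverse:
  fixes B :: "real mat"
  assumes B: "B \<in> carrier_mat m r"
    and inj: "\<And>v. v \<in> carrier_vec r \<Longrightarrow> B *\<^sub>v v = 0\<^sub>v m \<Longrightarrow> v = 0\<^sub>v r"
  obtains S where "S \<in> carrier_mat r r" "S * (transpose_mat B * B) = 1\<^sub>m r"
    "transpose_mat B * B * S = 1\<^sub>m r" "transpose_mat S = S"
proof -
  define G where "G = transpose_mat B * B"
  have G: "G \<in> carrier_mat r r" unfolding G_def using B by simp
  have "det G \<noteq> 0"
  proof
    assume "det G = 0"
    then obtain v where v: "v \<in> carrier_vec r" "v \<noteq> 0\<^sub>v r" "G *\<^sub>v v = 0\<^sub>v r"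
      using det_0_iff_vec_prod_zero_field[OF G] by blast
    define w where "w = B *\<^sub>v v"
    have w: "w \<in> carrier_vec m" unfolding w_def using B v by simp
    have "transpose_mat B *\<^sub>v w = 0\<^sub>v r" using v(3) B v(1) unfolding G_def w_def by simp
    then have "w \<bullet> w = 0"
      using transpose_vec_mult_scalar[OF B v(1) w] v(1) unfolding w_def by simp
    then have "w = 0\<^sub>v m" using conjugate_square_eq_0_vec[OF w] by simp
    then show False using inj[OF v(1)] v(2) unfolding w_def by simp
  qed
  then obtain S where S: "S \<in> carrier_mat r r" "S * G = 1\<^sub>m r" "G * S = 1\<^sub>m r"
    using det_non_zero_imp_unit[OF G, of undefined] unfolding Units_def ring_mat_def by auto
  have "transpose_mat G = G" using B unfolding G_def by (simp add: transpose_mult_dim)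
  then have "transpose_mat S * G = 1\<^sub>m r"
    using S G transpose_mult_dim[of G S] by (metis carrier_matD transpose_one)
  then have "transpose_mat S = S"
    using S G assoc_mult_mat_dim[of "transpose_mat S" G S] by simp
  with S show thesis using that unfolding G_def by blast
qed

definition moore_penrose :: "real mat \<Rightarrow> real mat \<Rightarrow> bool" where
  "moore_penrose A X \<longleftrightarrow> X \<in> carrier_mat (dim_col A) (dim_row A) \<and>
      A * X * A = A \<and> X * A * X = X \<and>
      transpose_mat (A * X) = A * X \<and> transpose_mat (X * A) = X * A"

lemma moore_penrose_unique:
  assumes X: "moore_penrose A X" and Y: "moore_penrose A Y"
  shows "X = Y"
proof -
  define m where "m = dim_row A"
  define n where "n = dim_col A"
  have A: "A \<in> carrier_mat m n" unfolding m_def n_def by auto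
  have Xc: "X \<in> carrier_mat n m" and X1: "A * X * A = A" and X2: "X * A * X = X"
    and X3: "transpose_mat (A * X) = A * X" and X4: "transpose_mat (X * A) = X * A"
    using X unfolding moore_penrose_def m_def n_def by auto
  have Yc: "Y \<in> carrier_mat n m" and Y1: "A * Y * A = A" and Y2: "Y * A * Y = Y"
    and Y3: "transpose_mat (A * Y) = A * Y" and Y4: "transpose_mat (Y * A) = Y * A"
    using Y unfolding moore_penrose_def m_def n_def by auto
  note simps = assoc_mult_mat_dim transpose_mult_dim
  have AtAY: "transpose_mat A * (A * Y) = transpose_mat A"
    using arg_cong[OF Y1, of transpose_mat] A Yc Y3 by (simp add: simps)
  have XAAt: "X * (A * transpose_mat A) = transpose_mat A"
    using arg_cong[OF X1, of transpose_mat] A Xc X4 by (simp add: simps)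
  have X2': "X * (A * X) = X" and Y2': "Y * (A * Y) = Y" using X2 Y2 A Xc Yc by (simp_all add: simps)
  have "X = X * transpose_mat (A * X)" using X2' X3 by simp
  also have "\<dots> = X * (transpose_mat X * (transpose_mat A * (A * Y)))"
    using A Xc by (simp add: simps AtAY)
  also have "\<dots> = X * (transpose_mat (A * X) * (A * Y))" using A Xc Yc by (simp add: simps)
  also have "\<dots> = X * (A * X) * (A * Y)" using X3 A Xc Yc by (simp add: simps)
  also have "\<dots> = X * (A * Y)" using X2' by simp
  finally have XX: "X = X * (A * Y)" .
  have "Y = transpose_mat (Y * A) * Y" using Y2' Y4 A Yc by (simp add: simps)
  also have "\<dots> = transpose_mat A * (transpose_mat Y * Y)" using A Yc by (simp add: simps)
  also have "\<dots> = X * (A * transpose_mat A) * (transpose_mat Y * Y)" using XAAt A Xc Yc by (simp add: simps)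
  also have "\<dots> = X * (A * (transpose_mat (Y * A) * Y))" using A Xc Yc by (simp add: simps)
  also have "\<dots> = X * (A * Y)" using Y4 Y2' A Yc by (simp add: simps)
  finally show ?thesis using XX by simp
qed

lemma moore_penrose_of_full_rank_factorization:
  fixes B C S1 S2 :: "real mat"
  assumes B: "B \<in> carrier_mat m r" and C: "C \<in> carrier_mat r n"
    and S1: "S1 \<in> carrier_mat r r" "S1 * (transpose_mat B * B) = 1\<^sub>m r" "transpose_mat S1 = S1"
    and S2: "S2 \<in> carrier_mat r r" "C * transpose_mat C * S2 = 1\<^sub>m r" "transpose_mat S2 = S2"
  shows "moore_penrose (B * C) (transpose_mat C * (S2 * (S1 * transpose_mat B)))"
proof -
  define X where "X = transpose_mat C * (S2 * (S1 * transpose_mat B))"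
  note simps = assoc_mult_mat_dim transpose_mult_dim
  have cancel1: "S1 * (transpose_mat B * (B * Z)) = Z" if "dim_row Z = r" for Z
    using B S1 that assoc_mult_mat_dim[of S1 "transpose_mat B * B" Z] by (simp add: simps)
  have cancel2: "C * (transpose_mat C * (S2 * Z)) = Z" if "dim_row Z = r" for Z
    using C S2 that assoc_mult_mat_dim[of "C * transpose_mat C" S2 Z] by (simp add: simps)
  have Xc: "X \<in> carrier_mat n m" unfolding X_def using B C S1 S2 by simp
  have AX: "B * C * X = B * (S1 * transpose_mat B)"
    unfolding X_def using B C S1 S2 by (simp add: simps cancel2)
  have XA: "X * (B * C) = transpose_mat C * (S2 * C)"
    unfolding X_def using B C S1 S2 by (simp add: simps cancel1)
  have "B * C * X * (B * C) = B * C"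
    unfolding AX using B C S1 S2 by (simp add: simps cancel1)
  moreover have "X * (B * C) * X = X"
    unfolding XA unfolding X_def using B C S1 S2 by (simp add: simps cancel2)
  moreover have "transpose_mat (B * C * X) = B * C * X"
    unfolding AX using B C S1 S2 by (simp add: simps)
  moreover have "transpose_mat (X * (B * C)) = X * (B * C)"
    unfolding XA using B C S1 S2 by (simp add: simps)
  ultimately show ?thesis unfolding moore_penrose_def X_def[symmetric] using Xc B C by simp
qed

lemma moore_penrose_exists: "\<exists>X. moore_penrose A X"
proof -
  have A: "A \<in> carrier_mat (dim_row A) (dim_col A)" by simp
  obtain r B C where B: "B \<in> carrier_mat (dim_row A) r" and C: "C \<in> carrier_mat r (dim_col A)"
    and "A = B * C"
    and injB: "\<And>v. v \<in> carrier_vec r \<Longrightarrow> B *\<^sub>v v = 0\<^sub>v (dim_row A) \<Longrightarrow> v = 0\<^sub>v r"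
    and injC: "\<And>v. v \<in> carrier_vec r \<Longrightarrow> transpose_mat C *\<^sub>v v = 0\<^sub>v (dim_col A) \<Longrightarrow> v = 0\<^sub>v r"
    by (rule full_rank_factorization[OF A]) (rule that)
  obtain S1 where S1: "S1 \<in> carrier_mat r r" "S1 * (transpose_mat B * B) = 1\<^sub>m r" "transpose_mat S1 = S1"
    by (rule gram_mat_symmetric_inverse[OF B injB]) (auto intro: that)
  have Ct: "transpose_mat C \<in> carrier_mat (dim_col A) r" using C by simp
  obtain S2 where S2: "S2 \<in> carrier_mat r r" "C * transpose_mat C * S2 = 1\<^sub>m r" "transpose_mat S2 = S2"
    by (rule gram_mat_symmetric_inverse[OF Ct injC]) (auto intro: that)
  show ?thesis
    using moore_penrose_of_full_rank_factorization[OF B C S1 S2] \<open>A = B * C\<close> by blast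
qed

lemma pinv_moore_penrose: "moore_penrose A (pinv A)"
proof -
  have "\<exists>!X. moore_penrose A X" using moore_penrose_exists moore_penrose_unique by blast
  then show ?thesis unfolding pinv_def moore_penrose_def[symmetric] by (rule theI')
qed

lemma pinv_carrier: "pinv A \<in> carrier_mat (dim_col A) (dim_row A)"
  using pinv_moore_penrose unfolding moore_penrose_def by blast

lemma transpose_mult_pinv: "transpose_mat A * (A * pinv A) = transpose_mat A"
proof -
  have "transpose_mat A = transpose_mat (A * pinv A * A)"
    using pinv_moore_penrose unfolding moore_penrose_def by simp
  also have "\<dots> = transpose_mat A * transpose_mat (A * pinv A)"
    using pinv_carrier[of A] by (simp add: transpose_mult_dim)
  also have "\<dots> = transpose_mat A * (A * pinv A)"
    using pinv_moore_penrose unfolding moore_penrose_def by simp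
  finally show ?thesis by simp
qed

section \<open>Perturbing an extreme point\<close>

definition mat_lincomb :: "('j \<Rightarrow> 'a::comm_semiring_0) \<Rightarrow> ('j \<Rightarrow> 'a mat) \<Rightarrow> 'j set \<Rightarrow> nat \<Rightarrow> nat \<Rightarrow> 'a mat"
  where "mat_lincomb c M J n m = mat n m (\<lambda>(i, l). \<Sum>j\<in>J. c j * M j $$ (i, l))"

lemma mat_lincomb_carrier [simp]: "mat_lincomb c M J n m \<in> carrier_mat n m"
  and dim_mat_lincomb [simp]: "dim_row (mat_lincomb c M J n m) = n" "dim_col (mat_lincomb c M J n m) = m"
  and index_mat_lincomb [simp]:
    "i < n \<Longrightarrow> l < m \<Longrightarrow> mat_lincomb c M J n m $$ (i, l) = (\<Sum>j\<in>J. c j * M j $$ (i, l))"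
  unfolding mat_lincomb_def by simp_all

lemma mult_mat_lincomb:
  assumes B: "B \<in> carrier_mat p n" and M: "\<And>j. j \<in> J \<Longrightarrow> M j \<in> carrier_mat n m"
  shows "B * mat_lincomb c M J n m = mat_lincomb c (\<lambda>j. B * M j) J p m"
proof (rule eq_matI)
  fix i l assume "i < dim_row (mat_lincomb c (\<lambda>j. B * M j) J p m)"
    "l < dim_col (mat_lincomb c (\<lambda>j. B * M j) J p m)"
  then have i: "i < p" and l: "l < m" by auto
  have "(B * mat_lincomb c M J n m) $$ (i, l) = (\<Sum>k<n. B $$ (i, k) * (\<Sum>j\<in>J. c j * M j $$ (k, l)))"
    using B i l by (simp add: scalar_prod_def lessThan_atLeast0)
  also have "\<dots> = (\<Sum>j\<in>J. c j * (\<Sum>k<n. B $$ (i, k) * M j $$ (k, l)))"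
    by (simp add: sum_distrib_left sum_distrib_right mult_ac sum.swap[of _ J])
  also have "\<dots> = (\<Sum>j\<in>J. c j * (B * M j) $$ (i, l))"
  proof (rule sum.cong[OF refl])
    fix j assume "j \<in> J"
    then show "c j * (\<Sum>k<n. B $$ (i, k) * M j $$ (k, l)) = c j * (B * M j) $$ (i, l)"
      using M[of j] B i l by (simp add: scalar_prod_def lessThan_atLeast0)
  qed
  finally show "(B * mat_lincomb c M J n m) $$ (i, l) = mat_lincomb c (\<lambda>j. B * M j) J p m $$ (i, l)"
    using i l by simp
qed (use B in auto)

lemma mat_lincomb_mult:
  assumes B: "B \<in> carrier_mat m q" and M: "\<And>j. j \<in> J \<Longrightarrow> M j \<in> carrier_mat n m"
  shows "mat_lincomb c M J n m * B = mat_lincomb c (\<lambda>j. M j * B) J n q"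
proof (rule eq_matI)
  fix i l assume "i < dim_row (mat_lincomb c (\<lambda>j. M j * B) J n q)"
    "l < dim_col (mat_lincomb c (\<lambda>j. M j * B) J n q)"
  then have i: "i < n" and l: "l < q" by auto
  have "(mat_lincomb c M J n m * B) $$ (i, l) = (\<Sum>k<m. (\<Sum>j\<in>J. c j * M j $$ (i, k)) * B $$ (k, l))"
    using B i l by (simp add: scalar_prod_def lessThan_atLeast0)
  also have "\<dots> = (\<Sum>j\<in>J. c j * (\<Sum>k<m. M j $$ (i, k) * B $$ (k, l)))"
    by (simp add: sum_distrib_left sum_distrib_right mult_ac sum.swap[of _ J])
  also have "\<dots> = (\<Sum>j\<in>J. c j * (M j * B) $$ (i, l))"
  proof (rule sum.cong[OF refl])
    fix j assume "j \<in> J"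
    then show "c j * (\<Sum>k<m. M j $$ (i, k) * B $$ (k, l)) = c j * (M j * B) $$ (i, l)"
      using M[of j] B i l by (simp add: scalar_prod_def lessThan_atLeast0)
  qed
  finally show "(mat_lincomb c M J n m * B) $$ (i, l) = mat_lincomb c (\<lambda>j. M j * B) J n q $$ (i, l)"
    using i l by simp
qed (use B in auto)

lemma mat_lincomb_zero: "(\<And>j. j \<in> J \<Longrightarrow> M j = 0\<^sub>m n m) \<Longrightarrow> mat_lincomb c M J n m = 0\<^sub>m n m"
  unfolding mat_lincomb_def by (intro eq_matI) auto

lemma uniform_step_size_exists:
  fixes d w :: "'i \<Rightarrow> real"
  assumes "finite I" and w: "\<And>x. x \<in> I \<Longrightarrow> w x \<ge> 0" and pos: "\<And>x. x \<in> I \<Longrightarrow> d x \<noteq> 0 \<Longrightarrow> w x > 0"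
  shows "\<exists>e>0. \<forall>x\<in>I. e * \<bar>d x\<bar> \<le> w x"
proof -
  define s where "s = (\<Sum>x\<in>I. \<bar>d x\<bar> / w x)"
  have "s \<ge> 0" unfolding s_def using w by (intro sum_nonneg) auto
  have "1 / (1 + s) * \<bar>d x\<bar> \<le> w x" if x: "x \<in> I" for x
  proof (cases "d x = 0")
    case True
    then show ?thesis using w[OF x] by simp
  next
    case False
    then have "w x > 0" using pos x by blast
    have "\<bar>d x\<bar> / w x \<le> s" unfolding s_def using w x \<open>finite I\<close> by (intro member_le_sum) auto
    then have "\<bar>d x\<bar> \<le> (1 + s) * w x" using \<open>w x > 0\<close> by (simp add: divide_le_eq algebra_simps)
    then show ?thesis using \<open>w x > 0\<close> \<open>s \<ge> 0\<close> by (simp add: divide_le_eq mult.commute)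
  qed
  moreover have "1 / (1 + s) > 0" using \<open>s \<ge> 0\<close> by simp
  ultimately show ?thesis by blast
qed

lemma feasible1_perturbation:
  assumes F: "(Hp, Hm) \<in> feasible1 A"
    and D: "D \<in> carrier_mat (dim_col A) (dim_row A)" "A * D = 0\<^sub>m (dim_row A) (dim_row A)"
    and supp: "\<And>i j. i < dim_col A \<Longrightarrow> j < dim_row A \<Longrightarrow> D $$ (i, j) \<noteq> 0 \<Longrightarrow>
      Hp $$ (i, j) \<noteq> 0 \<or> Hm $$ (i, j) \<noteq> 0"
  obtains e Dp Dm where "e > 0" "Dp - Dm = D"
    "Dp \<in> carrier_mat (dim_col A) (dim_row A)" "Dm \<in> carrier_mat (dim_col A) (dim_row A)"
    "\<And>f. \<bar>f\<bar> \<le> e \<Longrightarrow> (Hp + f \<cdot>\<^sub>m Dp, Hm + f \<cdot>\<^sub>m Dm) \<in> feasible1 A"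
proof -
  define n where "n = dim_col A"
  define m where "m = dim_row A"
  have A: "A \<in> carrier_mat m n" unfolding m_def n_def by auto
  have Hp: "Hp \<in> carrier_mat n m" and Hm: "Hm \<in> carrier_mat n m"
    and eq1: "A * (Hp - Hm) * A = A" and eq2: "transpose_mat (A * (Hp - Hm)) = A * (Hp - Hm)"
    and Hp_nonneg: "\<And>i j. i < n \<Longrightarrow> j < m \<Longrightarrow> Hp $$ (i, j) \<ge> 0"
    and Hm_nonneg: "\<And>i j. i < n \<Longrightarrow> j < m \<Longrightarrow> Hm $$ (i, j) \<ge> 0"
    using F unfolding feasible1_def nonneg_mat_def n_def m_def by auto
  have Dc: "D \<in> carrier_mat n m" and AD: "A * D = 0\<^sub>m m m" using D unfolding n_def m_def by auto
  \<comment> \<open>\<open>D\<close> is charged to \<open>Hp\<close> where \<open>Hp > 0\<close> and to \<open>Hm\<close> elsewhere; \<open>w\<close> is the slack there.\<close>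
  define w where "w ij = (if Hp $$ ij > 0 then Hp $$ ij else Hm $$ ij)" for ij
  define Dp where "Dp = mat n m (\<lambda>ij. if Hp $$ ij > 0 then D $$ ij else 0)"
  define Dm where "Dm = mat n m (\<lambda>ij. if Hp $$ ij > 0 then 0 else - D $$ ij)"
  have "\<exists>e>0. \<forall>ij\<in>{..<n} \<times> {..<m}. e * \<bar>D $$ ij\<bar> \<le> w ij"
  proof (rule uniform_step_size_exists)
    show "w ij \<ge> 0" if "ij \<in> {..<n} \<times> {..<m}" for ij
      using that Hm_nonneg by (auto simp: w_def)
    show "w ij > 0" if "ij \<in> {..<n} \<times> {..<m}" "D $$ ij \<noteq> 0" for ij
      using that supp Hp_nonneg Hm_nonneg unfolding w_def n_def m_def by (force simp: less_le)
  qed simp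
  then obtain e where "e > 0" and bound: "\<And>i j. i < n \<Longrightarrow> j < m \<Longrightarrow> e * \<bar>D $$ (i, j)\<bar> \<le> w (i, j)"
    by auto
  have Dpc: "Dp \<in> carrier_mat n m" and Dmc: "Dm \<in> carrier_mat n m" unfolding Dp_def Dm_def by auto
  have diff: "Dp - Dm = D" using Dc by (intro eq_matI) (auto simp: Dp_def Dm_def)
  have "(Hp + f \<cdot>\<^sub>m Dp, Hm + f \<cdot>\<^sub>m Dm) \<in> feasible1 A" if f: "\<bar>f\<bar> \<le> e" for f
  proof -
    have "0 \<le> (Hp + f \<cdot>\<^sub>m Dp) $$ (i, j) \<and> 0 \<le> (Hm + f \<cdot>\<^sub>m Dm) $$ (i, j)"
      if ij: "i < n" "j < m" for i j
    proof -
      have "\<bar>f * D $$ (i, j)\<bar> \<le> w (i, j)"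
        using mult_right_mono[OF f, of "\<bar>D $$ (i, j)\<bar>"] bound[OF ij] by (simp add: abs_mult)
      then show ?thesis using Hp_nonneg[OF ij] Hm_nonneg[OF ij] ij Hp Hm Dpc Dmc
        by (auto simp: Dp_def Dm_def w_def abs_le_iff)
    qed
    then have "nonneg_mat (Hp + f \<cdot>\<^sub>m Dp)" "nonneg_mat (Hm + f \<cdot>\<^sub>m Dm)"
      using Hp Hm Dpc Dmc unfolding nonneg_mat_def by auto
    moreover have "(Hp + f \<cdot>\<^sub>m Dp) - (Hm + f \<cdot>\<^sub>m Dm) = (Hp - Hm) + f \<cdot>\<^sub>m D"
      using Hp Hm Dpc Dmc Dc diff by (intro eq_matI) (auto simp: right_diff_distrib[symmetric])
    moreover have "A * ((Hp - Hm) + f \<cdot>\<^sub>m D) = A * (Hp - Hm)"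
    proof -
      have "A * ((Hp - Hm) + f \<cdot>\<^sub>m D) = A * (Hp - Hm) + A * (f \<cdot>\<^sub>m D)"
        by (rule mult_add_distrib_mat[OF A]) (use Hp Hm Dc in auto)
      then show ?thesis using A Hp Hm AD by (auto simp: mult_smult_distrib[OF A Dc] intro!: eq_matI)
    qed
    ultimately show ?thesis
      using Hp Hm Dpc Dmc eq1 eq2 unfolding feasible1_def n_def m_def by auto
  qed
  then show thesis using that \<open>e > 0\<close> diff Dpc Dmc unfolding n_def m_def by blast
qed

lemma extreme_pt_direction_eq_0:
  assumes ext: "extreme_pt F (Hp, Hm)" and F: "F \<subseteq> feasible1 A"
    and D: "D \<in> carrier_mat (dim_col A) (dim_row A)" "A * D = 0\<^sub>m (dim_row A) (dim_row A)"
    and supp: "\<And>i j. i < dim_col A \<Longrightarrow> j < dim_row A \<Longrightarrow> D $$ (i, j) \<noteq> 0 \<Longrightarrow>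
      Hp $$ (i, j) \<noteq> 0 \<or> Hm $$ (i, j) \<noteq> 0"
    and closed: "\<And>y e. y \<in> feasible1 A \<Longrightarrow> fst y - snd y = (Hp - Hm) + e \<cdot>\<^sub>m D \<Longrightarrow> y \<in> F"
  shows "D = 0\<^sub>m (dim_col A) (dim_row A)"
proof -
  define n where "n = dim_col A"
  define m where "m = dim_row A"
  have "(Hp, Hm) \<in> feasible1 A" using ext F unfolding extreme_pt_def by auto
  then have Hp: "Hp \<in> carrier_mat n m" and Hm: "Hm \<in> carrier_mat n m"
    unfolding feasible1_def n_def m_def by auto
  obtain e Dp Dm where "e > 0" and diff: "Dp - Dm = D"
    and Dp: "Dp \<in> carrier_mat n m" and Dm: "Dm \<in> carrier_mat n m"
    and feas: "\<And>f. \<bar>f\<bar> \<le> e \<Longrightarrow> (Hp + f \<cdot>\<^sub>m Dp, Hm + f \<cdot>\<^sub>m Dm) \<in> feasible1 A"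
    unfolding n_def m_def by (rule feasible1_perturbation[OF \<open>(Hp, Hm) \<in> feasible1 A\<close> D supp]) (auto intro: that)
  define y where "y f = (Hp + f \<cdot>\<^sub>m Dp, Hm + f \<cdot>\<^sub>m Dm)" for f
  have "fst (y f) - snd (y f) = (Hp - Hm) + f \<cdot>\<^sub>m D" for f
    using Hp Hm Dp Dm diff by (intro eq_matI) (auto simp: y_def right_diff_distrib[symmetric])
  then have yF: "y e \<in> F" "y (- e) \<in> F" using closed feas \<open>e > 0\<close> unfolding y_def by auto
  have ext': "y = z" if "y \<in> F" "z \<in> F" "0 < t" "t < 1"
    "Hp = t \<cdot>\<^sub>m fst y + (1 - t) \<cdot>\<^sub>m fst z" "Hm = t \<cdot>\<^sub>m snd y + (1 - t) \<cdot>\<^sub>m snd z" for y z t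
    using ext that unfolding extreme_pt_def by auto
  have "y e = y (- e)"
    by (rule ext'[OF yF, of "1/2"]) (use Hp Hm Dp Dm in \<open>auto simp: y_def field_simps intro!: eq_matI\<close>)
  have "Dp $$ (i, j) = 0 \<and> Dm $$ (i, j) = 0" if ij: "i < n" "j < m" for i j
  proof -
    have "fst (y e) $$ (i, j) = fst (y (- e)) $$ (i, j)" "snd (y e) $$ (i, j) = snd (y (- e)) $$ (i, j)"
      using \<open>y e = y (- e)\<close> by simp_all
    then show ?thesis using ij Hp Hm Dp Dm \<open>e > 0\<close> by (simp add: y_def)
  qed
  then show ?thesis using diff Dp Dm unfolding n_def m_def by (auto intro!: eq_matI)
qed

lemma extreme_pt_nnz_add_card_le:
  fixes M :: "'j \<Rightarrow> real mat"
  assumes ext: "extreme_pt F (Hp, Hm)" and F: "F \<subseteq> feasible1 A" and J: "finite J"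
    and M: "\<And>j. j \<in> J \<Longrightarrow> M j \<in> carrier_mat (dim_col A) (dim_row A)"
    and AM: "\<And>j. j \<in> J \<Longrightarrow> A * M j = 0\<^sub>m (dim_row A) (dim_row A)"
    and indep: "\<And>c. mat_lincomb c M J (dim_col A) (dim_row A) = 0\<^sub>m (dim_col A) (dim_row A) \<Longrightarrow>
      \<forall>j\<in>J. c j = 0"
    and closed: "\<And>c y e. y \<in> feasible1 A \<Longrightarrow>
      fst y - snd y = (Hp - Hm) + e \<cdot>\<^sub>m mat_lincomb c M J (dim_col A) (dim_row A) \<Longrightarrow> y \<in> F"
  shows "nnz (Hp - Hm) + card J \<le> dim_col A * dim_row A"
proof (rule ccontr)
  assume contra: "\<not> ?thesis"
  define n where "n = dim_col A"
  define m where "m = dim_row A"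
  have "(Hp, Hm) \<in> feasible1 A" using ext F unfolding extreme_pt_def by auto
  then have Hp: "Hp \<in> carrier_mat n m" and Hm: "Hm \<in> carrier_mat n m"
    unfolding feasible1_def n_def m_def by auto
  define I where "I = {..<n} \<times> {..<m}"
  define S where "S = {(i, j) \<in> I. Hp $$ (i, j) \<noteq> 0 \<or> Hm $$ (i, j) \<noteq> 0}"
  have "finite I" "S \<subseteq> I" "card I = n * m" unfolding I_def S_def by auto
  then have "finite S" by (simp add: finite_subset)
  have "nnz (Hp - Hm) \<le> card S"
    unfolding nnz_def using Hp Hm \<open>finite S\<close> by (intro card_mono) (auto simp: S_def I_def)
  moreover have "card (I - S) = n * m - card S" "card S \<le> n * m"
    using card_Diff_subset card_mono \<open>finite I\<close> \<open>finite S\<close> \<open>S \<subseteq> I\<close> \<open>card I = n * m\<close> by metis+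
  ultimately have "card (I - S) < card J" using contra unfolding n_def m_def by linarith
  then obtain c where c: "\<exists>j\<in>J. c j \<noteq> 0" "\<forall>x\<in>I - S. (\<Sum>j\<in>J. M j $$ x * c j) = 0"
    using homogeneous_system_nontrivial_solution[of "I - S" J "\<lambda>x j. M j $$ x"] J \<open>finite I\<close> by auto
  define D where "D = mat_lincomb c M J n m"
  have "A * D = mat_lincomb c (\<lambda>j. A * M j) J m m"
    unfolding D_def using M by (intro mult_mat_lincomb) (auto simp: n_def m_def)
  also have "\<dots> = 0\<^sub>m m m" using AM by (intro mat_lincomb_zero) (simp add: m_def)
  finally have AD: "A * D = 0\<^sub>m m m" .
  have supp: "Hp $$ (i, j) \<noteq> 0 \<or> Hm $$ (i, j) \<noteq> 0" if "i < n" "j < m" "D $$ (i, j) \<noteq> 0" for i j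
    using that c(2) by (auto simp: D_def S_def I_def mult.commute)
  have "D = 0\<^sub>m n m"
    using extreme_pt_direction_eq_0[OF ext F, of D] AD supp closed[of _ _ c]
    unfolding D_def n_def m_def by auto
  then have "\<forall>j\<in>J. c j = 0" using indep unfolding D_def n_def m_def by simp
  then show False using c(1) by blast
qed

section \<open>The support bounds\<close>

definition single_col_mat :: "nat \<Rightarrow> nat \<Rightarrow> nat \<Rightarrow> (nat \<Rightarrow> 'a::zero) \<Rightarrow> 'a mat" where
  "single_col_mat n k j v = mat n k (\<lambda>(i, l). if l = j then v i else 0)"

lemma single_col_mat_carrier [simp]: "single_col_mat n k j v \<in> carrier_mat n k"
  and dim_single_col_mat [simp]:
    "dim_row (single_col_mat n k j v) = n" "dim_col (single_col_mat n k j v) = k"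
  and index_single_col_mat [simp]:
    "i < n \<Longrightarrow> l < k \<Longrightarrow> single_col_mat n k j v $$ (i, l) = (if l = j then v i else 0)"
  unfolding single_col_mat_def by simp_all

lemma mult_single_col_mat_eq_0:
  fixes A :: "'a::comm_semiring_0 mat"
  assumes A: "A \<in> carrier_mat m n" and Av: "\<And>i. i < m \<Longrightarrow> (\<Sum>k<n. A $$ (i, k) * v k) = 0"
  shows "A * single_col_mat n c j v = 0\<^sub>m m c"
proof (rule eq_matI)
  fix i l assume "i < dim_row (0\<^sub>m m c :: 'a mat)" "l < dim_col (0\<^sub>m m c :: 'a mat)"
  then have i: "i < m" and l: "l < c" by auto
  have "(A * single_col_mat n c j v) $$ (i, l) = (\<Sum>k<n. A $$ (i, k) * (if l = j then v k else 0))"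
    using A i l by (simp add: scalar_prod_def lessThan_atLeast0)
  also have "\<dots> = (if l = j then (\<Sum>k<n. A $$ (i, k) * v k) else 0)" by simp
  finally show "(A * single_col_mat n c j v) $$ (i, l) = 0\<^sub>m m c $$ (i, l)" using Av[OF i] i l by simp
qed (use A in auto)

lemma index_single_col_mat_mult:
  fixes B :: "'a::comm_semiring_0 mat"
  assumes "B \<in> carrier_mat k c" "i < n" "l < c" "j < k"
  shows "(single_col_mat n k j v * B) $$ (i, l) = v i * B $$ (j, l)"
proof -
  have "(single_col_mat n k j v * B) $$ (i, l) = (\<Sum>k'<k. (if k' = j then v i else 0) * B $$ (k', l))"
    using assms by (simp add: scalar_prod_def lessThan_atLeast0)
  also have "\<dots> = v i * B $$ (j, l)" using assms(4) by (simp add: if_distrib[of "\<lambda>x. x * _"] cong: if_cong)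
  finally show ?thesis .
qed

lemma single_col_mats_lin_indep:
  fixes w :: "nat \<Rightarrow> nat \<Rightarrow> 'a::comm_semiring_1"
  assumes indep: "\<And>d. \<forall>k<n. (\<Sum>q\<in>L. d q * w q k) = 0 \<Longrightarrow> \<forall>q\<in>L. d q = 0"
    and c: "mat_lincomb c (\<lambda>x. single_col_mat n m (snd x) (w (fst x))) (L \<times> {..<m}) n m = 0\<^sub>m n m"
  shows "\<forall>x\<in>L \<times> {..<m}. c x = 0"
proof
  fix x assume "x \<in> L \<times> {..<m}"
  then obtain q l where x: "x = (q, l)" "q \<in> L" and l: "l < m" by auto
  have "(\<Sum>q\<in>L. c (q, l) * w q i) = 0" if i: "i < n" for i
  proof -
    have "(\<Sum>q\<in>L. c (q, l) * w q i)
        = (\<Sum>q\<in>L. \<Sum>l'<m. c (q, l') * single_col_mat n m l' (w q) $$ (i, l))"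
      using i l by (simp add: if_distrib[of "\<lambda>x. _ * x"] cong: if_cong)
    also have "\<dots> = mat_lincomb c (\<lambda>x. single_col_mat n m (snd x) (w (fst x))) (L \<times> {..<m}) n m $$ (i, l)"
      using i l by (simp add: sum.cartesian_product split_def)
    finally show ?thesis using c i l by simp
  qed
  then show "c x = 0" using indep[of "\<lambda>q. c (q, l)"] x by blast
qed

lemma single_col_mult_transpose_lin_indep:
  fixes A :: "'a::comm_semiring_1 mat"
  assumes A: "A \<in> carrier_mat m n" and P: "P \<subseteq> {..<n}"
    and indP: "\<And>c. \<forall>i<m. (\<Sum>p\<in>P. c p * A $$ (i, p)) = 0 \<Longrightarrow> \<forall>p\<in>P. c p = 0"
    and indep: "\<And>d. \<forall>k<n. (\<Sum>q\<in>L. d q * w q k) = 0 \<Longrightarrow> \<forall>q\<in>L. d q = 0"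
    and c: "mat_lincomb c (\<lambda>x. single_col_mat n n (snd x) (w (fst x)) * transpose_mat A) (L \<times> P) n m
      = 0\<^sub>m n m"
  shows "\<forall>x\<in>L \<times> P. c x = 0"
proof
  fix x assume "x \<in> L \<times> P"
  then obtain q p where x: "x = (q, p)" "q \<in> L" "p \<in> P" by auto
  have entry: "(single_col_mat n n p' v * transpose_mat A) $$ (i, l) = v i * A $$ (l, p')"
    if "p' \<in> P" "i < n" "l < m" for p' v i l
  proof -
    have "(single_col_mat n n p' v * transpose_mat A) $$ (i, l) = v i * transpose_mat A $$ (p', l)"
      by (rule index_single_col_mat_mult) (use that A P in auto)
    then show ?thesis using that A P by auto
  qed
  have "(\<Sum>p\<in>P. c (q, p) * A $$ (l, p)) = 0" if l: "l < m" for l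
  proof -
    have "(\<Sum>q\<in>L. (\<Sum>p\<in>P. c (q, p) * A $$ (l, p)) * w q i) = 0" if i: "i < n" for i
    proof -
      have "(\<Sum>q\<in>L. (\<Sum>p\<in>P. c (q, p) * A $$ (l, p)) * w q i)
          = (\<Sum>q\<in>L. \<Sum>p\<in>P. c (q, p) * (single_col_mat n n p (w q) * transpose_mat A) $$ (i, l))"
        using entry[OF _ i l] by (simp add: sum_distrib_left sum_distrib_right mult_ac)
      also have "\<dots> = mat_lincomb c (\<lambda>x. single_col_mat n n (snd x) (w (fst x)) * transpose_mat A)
          (L \<times> P) n m $$ (i, l)"
        using i l by (simp add: sum.cartesian_product split_def)
      finally show ?thesis using c i l by simp
    qed
    then show ?thesis using indep[of "\<lambda>q. \<Sum>p\<in>P. c (q, p) * A $$ (l, p)"] x(2) by blast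
  qed
  then show "c x = 0" using indP[of "\<lambda>p. c (q, p)"] x by blast
qed

theorem extreme_pt_feasible1_nnz_le:
  assumes ext: "extreme_pt (feasible1 A) (Hp, Hm)"
  shows "nnz (Hp - Hm) \<le> dim_row A * mrank A"
proof -
  define n where "n = dim_col A"
  define m where "m = dim_row A"
  have A: "A \<in> carrier_mat m n" unfolding m_def n_def by auto
  obtain P w where P: "P \<subseteq> {..<n}" "card P = vec_space.rank m A"
    and "\<And>c. \<forall>i<m. (\<Sum>p\<in>P. c p * A $$ (i, p)) = 0 \<Longrightarrow> \<forall>p\<in>P. c p = 0"
    and ker: "\<And>q i. q < n \<Longrightarrow> i < m \<Longrightarrow> (\<Sum>k<n. A $$ (i, k) * w q k) = 0"
    and indep: "\<And>d. \<forall>k<n. (\<Sum>q\<in>{..<n} - P. d q * w q k) = 0 \<Longrightarrow> \<forall>q\<in>{..<n} - P. d q = 0"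
    by (rule kernel_vectors_exist[OF A]) (rule that)
  define J where "J = ({..<n} - P) \<times> {..<m}"
  define M where "M = (\<lambda>x. single_col_mat n m (snd x) (w (fst x)))"
  have "nnz (Hp - Hm) + card J \<le> n * m"
    unfolding n_def m_def
  proof (rule extreme_pt_nnz_add_card_le[OF ext subset_refl])
    show "finite J" unfolding J_def by simp
    show "M x \<in> carrier_mat (dim_col A) (dim_row A)" for x
      unfolding M_def n_def m_def by simp
    show "A * M x = 0\<^sub>m (dim_row A) (dim_row A)" if "x \<in> J" for x
      using mult_single_col_mat_eq_0[OF A ker] that unfolding M_def J_def m_def by auto
    show "\<forall>x\<in>J. c x = 0"
      if "mat_lincomb c M J (dim_col A) (dim_row A) = 0\<^sub>m (dim_col A) (dim_row A)" for c
      using single_col_mats_lin_indep[OF indep, where c = c and m = m] that unfolding M_def J_def n_def m_def by simp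
  qed simp
  moreover have "card J = (n - card P) * m" "card P \<le> n"
    unfolding J_def using P(1) card_mono[OF finite_lessThan P(1)]
    by (simp_all add: card_cartesian_product card_Diff_subset finite_subset)
  moreover have "n * m = (n - card P) * m + card P * m"
    using \<open>card P \<le> n\<close> by (simp add: add_mult_distrib[symmetric])
  ultimately have "nnz (Hp - Hm) \<le> m * card P" by (simp add: mult.commute)
  then show ?thesis using P(2) unfolding mrank_def m_def by simp
qed

lemma feasible2_add_mult_transpose:
  assumes H: "(Hp, Hm) \<in> feasible2 A" and y: "y \<in> feasible1 A"
    and L: "L \<in> carrier_mat (dim_col A) (dim_col A)"
    and y_diff: "fst y - snd y = (Hp - Hm) + e \<cdot>\<^sub>m (L * transpose_mat A)"
  shows "y \<in> feasible2 A"
proof -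
  define n where "n = dim_col A"
  define m where "m = dim_row A"
  define X where "X = pinv A"
  define G where "G = Hp - Hm"
  have A: "A \<in> carrier_mat m n" unfolding m_def n_def by auto
  have X: "X \<in> carrier_mat n m" unfolding X_def n_def m_def by (rule pinv_carrier)
  have L': "L \<in> carrier_mat n n" using L unfolding n_def .
  have G: "G \<in> carrier_mat n m" "G * A * X = G"
    using H unfolding feasible2_def feasible1_def G_def X_def n_def m_def by auto
  \<comment> \<open>Right multiples of \<open>A\<^sup>T\<close> are fixed by \<open>A A\<^sup>+\<close>.\<close>
  have "L * transpose_mat A * A * X = L * (transpose_mat A * (A * X))"
    using L' A X by (simp add: assoc_mult_mat_dim)
  then have LAX: "L * transpose_mat A * A * X = L * transpose_mat A"
    using transpose_mult_pinv[of A] unfolding X_def by simp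
  have "(G + e \<cdot>\<^sub>m (L * transpose_mat A)) * A * X = G * A * X + e \<cdot>\<^sub>m (L * transpose_mat A * A * X)"
    using G(1) L' A X
    by (simp add: add_mult_distrib_mat[of _ n m] mult_smult_assoc_mat[of _ n m]
        add_mult_distrib_mat[of _ n n] mult_smult_assoc_mat[of _ n n])
  then have "(fst y - snd y) * A * X = fst y - snd y"
    using y_diff G(2) LAX unfolding G_def by simp
  then show ?thesis using y unfolding feasible2_def X_def by (cases y) auto
qed

lemma nat_le_mult_add_diff_mult_diff:
  fixes z k n m :: nat
  assumes bound: "z + (n - k) * k \<le> n * m" and "k \<le> n"
  shows "z \<le> m * k + (m - k) * (n - k)"
proof -
  obtain b where n: "n = k + b" using \<open>k \<le> n\<close> le_Suc_ex by blast
  show ?thesis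
  proof (cases "k \<le> m")
    case True
    then obtain a where "m = k + a" using le_Suc_ex by blast
    then show ?thesis using bound unfolding n by (simp add: algebra_simps)
  next
    case False
    have "z + b * k \<le> b * m + m * k" using bound unfolding n by (simp add: algebra_simps)
    moreover have "b * m \<le> b * k" using False by simp
    ultimately have "z \<le> m * k" by linarith
    then show ?thesis using False by simp
  qed
qed

theorem extreme_pt_feasible2_nnz_le:
  assumes ext: "extreme_pt (feasible2 A) (Hp, Hm)"
  shows "nnz (Hp - Hm) \<le> dim_row A * mrank A + (dim_row A - mrank A) * (dim_col A - mrank A)"
proof -
  define n where "n = dim_col A"
  define m where "m = dim_row A"
  have A: "A \<in> carrier_mat m n" unfolding m_def n_def by auto
  obtain P w where P: "P \<subseteq> {..<n}" "card P = vec_space.rank m A"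
    and indP: "\<And>c. \<forall>i<m. (\<Sum>p\<in>P. c p * A $$ (i, p)) = 0 \<Longrightarrow> \<forall>p\<in>P. c p = 0"
    and ker: "\<And>q i. q < n \<Longrightarrow> i < m \<Longrightarrow> (\<Sum>k<n. A $$ (i, k) * w q k) = 0"
    and indep: "\<And>d. \<forall>k<n. (\<Sum>q\<in>{..<n} - P. d q * w q k) = 0 \<Longrightarrow> \<forall>q\<in>{..<n} - P. d q = 0"
    by (rule kernel_vectors_exist[OF A]) (rule that)
  have "finite P" using P(1) by (rule finite_subset) simp
  define J where "J = ({..<n} - P) \<times> P"
  define Z where "Z = (\<lambda>x. single_col_mat n n (snd x) (w (fst x)))"
  define M where "M = (\<lambda>x. Z x * transpose_mat A)"
  have "nnz (Hp - Hm) + card J \<le> n * m"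
    unfolding n_def m_def
  proof (rule extreme_pt_nnz_add_card_le[OF ext])
    show "feasible2 A \<subseteq> feasible1 A" unfolding feasible2_def by auto
    show "finite J" unfolding J_def using \<open>finite P\<close> by simp
    have "M x \<in> carrier_mat n m" for x unfolding M_def Z_def using A by (auto intro: mult_carrier_mat)
    then show "M x \<in> carrier_mat (dim_col A) (dim_row A)" for x unfolding n_def m_def .
    show "A * M x = 0\<^sub>m (dim_row A) (dim_row A)" if "x \<in> J" for x
    proof -
      have "A * Z x = 0\<^sub>m m n"
        using mult_single_col_mat_eq_0[OF A ker] that unfolding Z_def J_def by auto
      moreover have "A * M x = A * Z x * transpose_mat A"
        unfolding M_def Z_def using A by (simp add: assoc_mult_mat_dim)
      ultimately show ?thesis using A by simp
    qed
    show "\<forall>x\<in>J. c x = 0"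
      if "mat_lincomb c M J (dim_col A) (dim_row A) = 0\<^sub>m (dim_col A) (dim_row A)" for c
      using single_col_mult_transpose_lin_indep[OF A P(1) indP indep, where c = c] that
      unfolding M_def Z_def J_def n_def m_def by simp
    show "y \<in> feasible2 A" if "y \<in> feasible1 A"
      and "fst y - snd y = (Hp - Hm) + e \<cdot>\<^sub>m mat_lincomb c M J (dim_col A) (dim_row A)" for c y e
    proof (rule feasible2_add_mult_transpose)
      show "(Hp, Hm) \<in> feasible2 A" using ext unfolding extreme_pt_def by simp
      show "mat_lincomb c Z J n n \<in> carrier_mat (dim_col A) (dim_col A)" unfolding n_def by simp
      have "mat_lincomb c M J n m = mat_lincomb c Z J n n * transpose_mat A"
        unfolding M_def Z_def using A by (intro mat_lincomb_mult[symmetric]) auto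
      then show "fst y - snd y = (Hp - Hm) + e \<cdot>\<^sub>m (mat_lincomb c Z J n n * transpose_mat A)"
        using that(2) unfolding n_def m_def by simp
    qed (fact that(1))
  qed
  moreover have "card J = (n - card P) * card P" "card P \<le> n"
    unfolding J_def using P(1) card_mono[OF finite_lessThan P(1)] \<open>finite P\<close>
    by (simp_all add: card_cartesian_product card_Diff_subset)
  ultimately have "nnz (Hp - Hm) \<le> m * card P + (m - card P) * (n - card P)"
    by (intro nat_le_mult_add_diff_mult_diff) simp_all
  then show ?thesis using P(2) unfolding mrank_def m_def n_def by simp
qed

section \<open>Sharpness of the bound for LP (1)\<close>

lemma symmetric_mat_square_eq_0:
  fixes P :: "real mat"
  assumes P: "P \<in> carrier_mat m m" and s: "transpose_mat P = P" and z: "P * P = 0\<^sub>m m m"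
  shows "P = 0\<^sub>m m m"
proof (rule eq_matI)
  fix i k assume "i < dim_row (0\<^sub>m m m :: real mat)" "k < dim_col (0\<^sub>m m m :: real mat)"
  then have i: "i < m" and k: "k < m" by auto
  have "(P * P) $$ (i, i) = (\<Sum>l<m. P $$ (i, l) * P $$ (l, i))"
    using P i by (simp add: scalar_prod_def lessThan_atLeast0)
  also have "\<dots> = (\<Sum>l<m. P $$ (i, l) * P $$ (i, l))"
  proof (rule sum.cong[OF refl])
    fix l assume "l \<in> {..<m}"
    then have "P $$ (l, i) = transpose_mat P $$ (i, l)" using P i by simp
    then show "P $$ (i, l) * P $$ (l, i) = P $$ (i, l) * P $$ (i, l)" using s by simp
  qed
  finally have "(\<Sum>l<m. P $$ (i, l) * P $$ (i, l)) = 0" using z i by simp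
  then have "\<forall>l\<in>{..<m}. P $$ (i, l) * P $$ (i, l) = 0" by (subst sum_nonneg_eq_0_iff[symmetric]) auto
  then show "P $$ (i, k) = 0\<^sub>m m m $$ (i, k)" using i k by auto
qed (use P in auto)

lemma nonneg_mat_convex_comb_eq_0:
  fixes Y Z :: "real mat"
  assumes "Y \<in> carrier_mat n m" "Z \<in> carrier_mat n m" "nonneg_mat Y" "nonneg_mat Z"
    and "0 < t" "t < 1" "i < n" "j < m" "(t \<cdot>\<^sub>m Y + (1 - t) \<cdot>\<^sub>m Z) $$ (i, j) = 0"
  shows "Y $$ (i, j) = 0 \<and> Z $$ (i, j) = 0"
proof -
  have "Y $$ (i, j) \<ge> 0" "Z $$ (i, j) \<ge> 0" using assms unfolding nonneg_mat_def by auto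
  moreover have "t * Y $$ (i, j) + (1 - t) * Z $$ (i, j) = 0" using assms by simp
  ultimately show ?thesis using assms(5,6)
    by (smt (verit) mult_pos_pos mult_nonneg_nonneg)
qed

lemma feasible1_diff:
  assumes "(Y1, Y2) \<in> feasible1 A" "(Z1, Z2) \<in> feasible1 A"
  defines "D \<equiv> (Y1 - Y2) - (Z1 - Z2)"
  shows "A * D * A = 0\<^sub>m (dim_row A) (dim_col A)" "transpose_mat (A * D) = A * D"
proof -
  define n where "n = dim_col A"
  define m where "m = dim_row A"
  have A: "A \<in> carrier_mat m n" unfolding m_def n_def by auto
  have Y: "Y1 - Y2 \<in> carrier_mat n m" "A * (Y1 - Y2) * A = A"
    "transpose_mat (A * (Y1 - Y2)) = A * (Y1 - Y2)"
    and Z: "Z1 - Z2 \<in> carrier_mat n m" "A * (Z1 - Z2) * A = A"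
    "transpose_mat (A * (Z1 - Z2)) = A * (Z1 - Z2)"
    using assms unfolding feasible1_def n_def m_def by auto
  have AD: "A * D = A * (Y1 - Y2) - A * (Z1 - Z2)"
    unfolding D_def by (rule mult_minus_distrib_mat[OF A Y(1) Z(1)])
  have "A * D * A = A * (Y1 - Y2) * A - A * (Z1 - Z2) * A"
    unfolding AD by (rule minus_mult_distrib_mat[of _ m m]) (use A Y Z in simp_all)
  then show "A * D * A = 0\<^sub>m (dim_row A) (dim_col A)" using A Y Z by simp
  show "transpose_mat (A * D) = A * D"
    unfolding AD using A Y Z by (simp add: transpose_minus[of _ m m])
qed

lemma extreme_pt_feasible1I:
  assumes F: "(Hp, Hm) \<in> feasible1 A"
    and disj: "\<And>i j. i < dim_col A \<Longrightarrow> j < dim_row A \<Longrightarrow> Hp $$ (i, j) = 0 \<or> Hm $$ (i, j) = 0"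
    and uniq: "\<And>D. D \<in> carrier_mat (dim_col A) (dim_row A) \<Longrightarrow>
      (\<And>i j. i < dim_col A \<Longrightarrow> j < dim_row A \<Longrightarrow> Hp $$ (i, j) = 0 \<Longrightarrow> Hm $$ (i, j) = 0 \<Longrightarrow> D $$ (i, j) = 0) \<Longrightarrow>
      A * D * A = 0\<^sub>m (dim_row A) (dim_col A) \<Longrightarrow> transpose_mat (A * D) = A * D \<Longrightarrow>
      D = 0\<^sub>m (dim_col A) (dim_row A)"
  shows "extreme_pt (feasible1 A) (Hp, Hm)"
  unfolding extreme_pt_def
proof (intro conjI F ballI allI impI)
  define n where "n = dim_col A"
  define m where "m = dim_row A"
  fix y z t assume y: "y \<in> feasible1 A" and z: "z \<in> feasible1 A"
    and t: "0 < t \<and> t < 1 \<and> fst (Hp, Hm) = t \<cdot>\<^sub>m fst y + (1 - t) \<cdot>\<^sub>m fst z \<and>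
      snd (Hp, Hm) = t \<cdot>\<^sub>m snd y + (1 - t) \<cdot>\<^sub>m snd z"
  obtain y1 y2 z1 z2 where yz: "y = (y1, y2)" "z = (z1, z2)" by (cases y, cases z)
  have carrier: "y1 \<in> carrier_mat n m" "y2 \<in> carrier_mat n m" "z1 \<in> carrier_mat n m" "z2 \<in> carrier_mat n m"
    and nonneg: "nonneg_mat y1" "nonneg_mat y2" "nonneg_mat z1" "nonneg_mat z2"
    using y z unfolding yz feasible1_def n_def m_def by auto
  have comb: "Hp = t \<cdot>\<^sub>m y1 + (1 - t) \<cdot>\<^sub>m z1" "Hm = t \<cdot>\<^sub>m y2 + (1 - t) \<cdot>\<^sub>m z2"
    using t unfolding yz by auto
  have vanish1: "y1 $$ (i, j) = 0 \<and> z1 $$ (i, j) = 0" if "i < n" "j < m" "Hp $$ (i, j) = 0" for i j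
    using nonneg_mat_convex_comb_eq_0[OF carrier(1,3) nonneg(1,3)] comb(1) t that by auto
  have vanish2: "y2 $$ (i, j) = 0 \<and> z2 $$ (i, j) = 0" if "i < n" "j < m" "Hm $$ (i, j) = 0" for i j
    using nonneg_mat_convex_comb_eq_0[OF carrier(2,4) nonneg(2,4)] comb(2) t that by auto
  define D where "D = (y1 - y2) - (z1 - z2)"
  have ADA: "A * D * A = 0\<^sub>m (dim_row A) (dim_col A)" and AD: "transpose_mat (A * D) = A * D"
    using feasible1_diff[of y1 y2 A z1 z2] y z unfolding yz D_def by auto
  have D0: "D = 0\<^sub>m n m"
    unfolding n_def m_def
  proof (rule uniq)
    show "D \<in> carrier_mat (dim_col A) (dim_row A)"
      using carrier unfolding D_def n_def m_def by (intro minus_carrier_mat) auto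
    show "D $$ (i, j) = 0" if "i < dim_col A" "j < dim_row A" "Hp $$ (i, j) = 0" "Hm $$ (i, j) = 0" for i j
      using vanish1[of i j] vanish2[of i j] that carrier unfolding D_def n_def m_def by simp
  qed (fact ADA, fact AD)
  have diff: "y1 $$ (i, j) - y2 $$ (i, j) = z1 $$ (i, j) - z2 $$ (i, j)" if "i < n" "j < m" for i j
  proof -
    have "D $$ (i, j) = 0" using D0 that by simp
    then show ?thesis using that carrier unfolding D_def by simp
  qed
  have "y1 $$ (i, j) = z1 $$ (i, j) \<and> y2 $$ (i, j) = z2 $$ (i, j)" if "i < n" "j < m" for i j
    using disj[of i j] vanish1[OF that] vanish2[OF that] diff[OF that] that unfolding n_def m_def by auto
  then show "y = z" unfolding yz using carrier by (auto intro!: eq_matI)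
qed

lemma sum_if_less:
  fixes a b :: "'a::semiring_1"
  assumes "r \<le> m"
  shows "(\<Sum>j<m. if j < r then a else b) = of_nat r * a + of_nat (m - r) * b"
proof -
  have "(\<Sum>j<m. if j < r then a else b) = (\<Sum>j\<in>{..<m} \<inter> {j. j < r}. a) + (\<Sum>j\<in>{..<m} \<inter> - {j. j < r}. b)"
    by (rule sum.If_cases) simp
  also have "{..<m} \<inter> {j. j < r} = {..<r}" using assms by auto
  also have "{..<m} \<inter> - {j. j < r} = {r..<m}" by auto
  finally show ?thesis by simp
qed

context
  fixes m n r :: nat
  assumes rn: "r \<le> n" and nm: "n \<le> m" and r1: "1 \<le> r"
begin

definition sharp_U :: "real mat" where
  "sharp_U = mat m r (\<lambda>(i, k). (if i = k then 1 else 0) + 1)"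

definition sharp_den :: real where
  "sharp_den = 1 + (real m + 2) * real r"

definition sharp_g :: "nat \<Rightarrow> real" where
  "sharp_g j = (if j < r then - (real m + 1) else 1) / sharp_den"

\<comment> \<open>\<open>sharp_V\<close> is the pseudoinverse of \<open>sharp_U\<close>: the constants in \<open>sharp_g\<close> are forced by
  \<open>sharp_V * sharp_U = 1\<close> and the symmetry of \<open>sharp_U * sharp_V\<close>, and no entry of \<open>sharp_V\<close> vanishes.\<close>
definition sharp_V :: "real mat" where
  "sharp_V = mat r m (\<lambda>(k, j). (if j = k then 1 else 0) + sharp_g j)"

lemma sharp_den_pos: "sharp_den > 0" unfolding sharp_den_def by (simp add: add_pos_nonneg)

lemma sharp_V_U: "sharp_V * sharp_U = 1\<^sub>m r"
proof (rule eq_matI)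
  fix k l assume "k < dim_row (1\<^sub>m r :: real mat)" "l < dim_col (1\<^sub>m r :: real mat)"
  then have k: "k < r" and l: "l < r" by auto
  have km: "k < m" "l < m" using k l rn nm by auto
  have "(sharp_V * sharp_U) $$ (k, l)
      = (\<Sum>j<m. ((if j = k then 1 else 0) + sharp_g j) * ((if j = l then 1 else 0) + 1))"
    using k l by (simp add: sharp_V_def sharp_U_def scalar_prod_def lessThan_atLeast0)
  also have "\<dots> = (\<Sum>j<m. (if j = k \<and> j = l then 1 else 0) + (if j = k then 1 else 0)
      + (if j = l then sharp_g j else 0) + sharp_g j)"
    by (rule sum.cong[OF refl]) simp
  also have "\<dots> = (\<Sum>j<m. (if j = k \<and> j = l then 1 else 0)) + (\<Sum>j<m. (if j = k then 1 else 0))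
      + (\<Sum>j<m. (if j = l then sharp_g j else 0)) + (\<Sum>j<m. sharp_g j)"
    by (simp add: sum.distrib)
  also have "(\<Sum>j<m. (if j = k \<and> j = l then 1 else (0::real))) = (if k = l then 1 else 0)"
    using km by (cases "k = l") simp_all
  also have "(\<Sum>j<m. (if j = k then 1 else (0::real))) = 1" using km by simp
  also have "(\<Sum>j<m. (if j = l then sharp_g j else 0)) = sharp_g l" using km by simp
  also have "(\<Sum>j<m. sharp_g j) = (real r * (- (real m + 1)) + real (m - r)) / sharp_den"
    unfolding sharp_g_def sum_divide_distrib[symmetric] using sum_if_less[of r m "- (real m + 1)" 1] rn nm
    by (simp add: of_nat_diff)
  finally have e: "(sharp_V * sharp_U) $$ (k, l)
      = (if k = l then 1 else 0) + 1 + sharp_g l + (real r * (- (real m + 1)) + real (m - r)) / sharp_den"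
    by simp
  have "1 + sharp_g l + (real r * (- (real m + 1)) + real (m - r)) / sharp_den = 0"
    using l sharp_den_pos rn nm unfolding sharp_g_def by (simp add: field_simps of_nat_diff sharp_den_def)
  then show "(sharp_V * sharp_U) $$ (k, l) = 1\<^sub>m r $$ (k, l)" using e k l by simp
qed (simp_all add: sharp_V_def sharp_U_def)

lemma index_sharp_U_V:
  assumes i: "i < m" and j: "j < m"
  shows "(sharp_U * sharp_V) $$ (i, j) = (if i = j \<and> i < r then 1 else 0) + (if i < r then sharp_g j else 0)
    + (if j < r then 1 else 0) + real r * sharp_g j"
proof -
  have "(sharp_U * sharp_V) $$ (i, j)
      = (\<Sum>k<r. ((if i = k then 1 else 0) + 1) * ((if j = k then 1 else 0) + sharp_g j))"
    using i j by (simp add: sharp_V_def sharp_U_def scalar_prod_def lessThan_atLeast0)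
  also have "\<dots> = (\<Sum>k<r. (if k = i \<and> k = j then 1 else 0) + (if k = i then sharp_g j else 0)
      + (if k = j then 1 else 0) + sharp_g j)"
    by (rule sum.cong[OF refl]) auto
  also have "\<dots> = (\<Sum>k<r. (if k = i \<and> k = j then 1 else 0)) + (\<Sum>k<r. (if k = i then sharp_g j else 0))
      + (\<Sum>k<r. (if k = j then 1 else 0)) + (\<Sum>k<r. sharp_g j)"
    by (simp add: sum.distrib)
  also have "(\<Sum>k<r. (if k = i \<and> k = j then 1 else (0::real))) = (if i = j \<and> i < r then 1 else 0)"
    by (cases "i = j") (simp_all add: sum.delta)
  finally show ?thesis by (simp add: sum.delta)
qed

lemma sharp_U_V_symmetric: "transpose_mat (sharp_U * sharp_V) = sharp_U * sharp_V"
proof (rule eq_matI)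
  fix i j assume "i < dim_row (sharp_U * sharp_V)" "j < dim_col (sharp_U * sharp_V)"
  then have i: "i < m" and j: "j < m" by (auto simp: sharp_U_def sharp_V_def)
  have "(sharp_U * sharp_V) $$ (j, i) = (sharp_U * sharp_V) $$ (i, j)"
    unfolding index_sharp_U_V[OF i j] index_sharp_U_V[OF j i] using sharp_den_pos
    by (cases "i < r"; cases "j < r") (auto simp: sharp_g_def field_simps sharp_den_def)
  then show "transpose_mat (sharp_U * sharp_V) $$ (i, j) = (sharp_U * sharp_V) $$ (i, j)"
    using i j by (simp add: sharp_U_def sharp_V_def)
qed (simp_all add: sharp_U_def sharp_V_def)

definition sharp_sel :: "nat \<Rightarrow> nat" where
  "sharp_sel j = (if j < r then j else 0)"

definition sharp_E :: "real mat" where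
  "sharp_E = mat r n (\<lambda>(k, j). if k = sharp_sel j then 1 else 0)"

definition sharp_F :: "real mat" where
  "sharp_F = mat n r (\<lambda>(k, l). if k = l then 1 else 0)"

\<comment> \<open>The columns \<open>r, \<dots>, n - 1\<close> of \<open>sharp_A\<close> repeat its first column, so its rank is that of \<open>sharp_U\<close>.\<close>
definition sharp_A :: "real mat" where
  "sharp_A = sharp_U * sharp_E"

definition sharp_H :: "real mat" where
  "sharp_H = sharp_F * sharp_V"

lemma sharp_carriers:
  "sharp_U \<in> carrier_mat m r" "sharp_V \<in> carrier_mat r m" "sharp_E \<in> carrier_mat r n"
  "sharp_F \<in> carrier_mat n r" "sharp_A \<in> carrier_mat m n" "sharp_H \<in> carrier_mat n m"
  unfolding sharp_U_def sharp_V_def sharp_E_def sharp_F_def sharp_A_def sharp_H_def by auto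

lemma sharp_sel_less: "j < n \<Longrightarrow> sharp_sel j < r" using r1 unfolding sharp_sel_def by auto

lemma sharp_E_F: "sharp_E * sharp_F = 1\<^sub>m r"
proof (rule eq_matI)
  fix k l assume "k < dim_row (1\<^sub>m r :: real mat)" "l < dim_col (1\<^sub>m r :: real mat)"
  then have k: "k < r" and l: "l < r" by auto
  have ln: "l < n" using l rn by simp
  have "(sharp_E * sharp_F) $$ (k, l) = (\<Sum>j<n. (if k = sharp_sel j then 1 else 0) * (if j = l then 1 else 0))"
    using k l ln by (simp add: sharp_E_def sharp_F_def scalar_prod_def lessThan_atLeast0)
  also have "\<dots> = (\<Sum>j<n. (if j = l then (if k = l then 1 else 0) else 0))"
    by (rule sum.cong[OF refl]) (use l in \<open>auto simp: sharp_sel_def\<close>)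
  also have "\<dots> = (if k = l then 1 else 0)" using ln by simp
  finally show "(sharp_E * sharp_F) $$ (k, l) = 1\<^sub>m r $$ (k, l)" using k l by simp
qed (simp_all add: sharp_E_def sharp_F_def)

lemma index_sharp_A: "i < m \<Longrightarrow> j < n \<Longrightarrow> sharp_A $$ (i, j) = sharp_U $$ (i, sharp_sel j)"
proof -
  assume i: "i < m" and j: "j < n"
  have "sharp_A $$ (i, j) = (\<Sum>k<r. sharp_U $$ (i, k) * (if k = sharp_sel j then 1 else 0))"
    using i j sharp_carriers by (simp add: sharp_A_def sharp_E_def scalar_prod_def lessThan_atLeast0)
  also have "\<dots> = (\<Sum>k<r. if k = sharp_sel j then sharp_U $$ (i, k) else 0)" by (rule sum.cong) auto
  also have "\<dots> = sharp_U $$ (i, sharp_sel j)" using sharp_sel_less[OF j] by simp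
  finally show ?thesis .
qed

lemma index_sharp_H: "i < n \<Longrightarrow> j < m \<Longrightarrow> sharp_H $$ (i, j) = (if i < r then sharp_V $$ (i, j) else 0)"
proof -
  assume i: "i < n" and j: "j < m"
  have "sharp_H $$ (i, j) = (\<Sum>k<r. (if i = k then 1 else 0) * sharp_V $$ (k, j))"
    using i j sharp_carriers by (simp add: sharp_H_def sharp_F_def scalar_prod_def lessThan_atLeast0)
  also have "\<dots> = (\<Sum>k<r. if k = i then sharp_V $$ (i, j) else 0)" by (rule sum.cong) auto
  also have "\<dots> = (if i < r then sharp_V $$ (i, j) else 0)" by simp
  finally show ?thesis .
qed

lemma sharp_A_H: "sharp_A * sharp_H = sharp_U * sharp_V"
proof -
  have r1: "sharp_E * (sharp_F * Z) = Z" if "dim_row Z = r" for Z :: "real mat"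
  proof -
    have "sharp_E * (sharp_F * Z) = (sharp_E * sharp_F) * Z" using sharp_carriers that by (simp add: assoc_mult_mat_dim)
    then show ?thesis using sharp_E_F that by simp
  qed
  show ?thesis unfolding sharp_A_def sharp_H_def using sharp_carriers by (simp add: assoc_mult_mat_dim r1)
qed

lemma sharp_V_U_mult: "sharp_V * (sharp_U * Z) = Z" if "dim_row Z = r" for Z :: "real mat"
proof -
  have "sharp_V * (sharp_U * Z) = (sharp_V * sharp_U) * Z" using sharp_carriers that by (simp add: assoc_mult_mat_dim)
  then show ?thesis using sharp_V_U that by simp
qed

lemma sharp_A_H_A: "sharp_A * sharp_H * sharp_A = sharp_A"
  unfolding sharp_A_H unfolding sharp_A_def using sharp_carriers by (simp add: assoc_mult_mat_dim sharp_V_U_mult)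

lemma sharp_A_H_symmetric: "transpose_mat (sharp_A * sharp_H) = sharp_A * sharp_H"
  unfolding sharp_A_H by (rule sharp_U_V_symmetric)

definition sharp_Hp :: "real mat" where
  "sharp_Hp = mat n m (\<lambda>ij. max (sharp_H $$ ij) 0)"

definition sharp_Hm :: "real mat" where
  "sharp_Hm = mat n m (\<lambda>ij. max (- sharp_H $$ ij) 0)"

lemma sharp_Hp_Hm: "sharp_Hp - sharp_Hm = sharp_H"
  using sharp_carriers by (intro eq_matI) (auto simp: sharp_Hp_def sharp_Hm_def)

lemma sharp_feasible1: "(sharp_Hp, sharp_Hm) \<in> feasible1 sharp_A"
  using sharp_carriers sharp_A_H_A sharp_A_H_symmetric sharp_Hp_Hm unfolding feasible1_def nonneg_mat_def
  by (auto simp: sharp_Hp_def sharp_Hm_def)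

lemma distinct_cols_sharp_U: "distinct (cols sharp_U)"
proof -
  have "col sharp_U k \<noteq> col sharp_U k'" if "k < r" "k' < r" "k \<noteq> k'" for k k'
  proof
    assume "col sharp_U k = col sharp_U k'"
    then have "col sharp_U k $ k = col sharp_U k' $ k" by simp
    then show False using that rn nm sharp_carriers by (simp add: sharp_U_def)
  qed
  then show ?thesis using sharp_carriers by (auto simp: distinct_conv_nth cols_length)
qed

lemma rank_sharp_U: "vec_space.rank m sharp_U = r"
proof -
  interpret vec_space "TYPE(real)" m .
  have "lin_indpt (set (cols sharp_U))"
  proof
    assume "lin_dep (set (cols sharp_U))"
    then obtain v where v: "v \<in> carrier_vec r" "v \<noteq> 0\<^sub>v r" "sharp_U *\<^sub>v v = 0\<^sub>v m"
      using lin_depE[OF sharp_carriers(1) _ distinct_cols_sharp_U] by blast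
    have "v = (sharp_V * sharp_U) *\<^sub>v v" using sharp_V_U v by simp
    also have "\<dots> = sharp_V *\<^sub>v (sharp_U *\<^sub>v v)" using sharp_carriers v by simp
    also have "\<dots> = sharp_V *\<^sub>v 0\<^sub>v m" using v by simp
    also have "\<dots> = 0\<^sub>v r" using sharp_carriers by (intro eq_vecI) (auto simp: scalar_prod_def)
    finally show False using v(2) by simp
  qed
  then show ?thesis using lin_indpt_full_rank[OF sharp_carriers(1) distinct_cols_sharp_U] by simp
qed

lemma mrank_sharp_A: "mrank sharp_A = r"
proof -
  have "set (cols sharp_A) = set (cols sharp_U)"
  proof -
    have colA: "col sharp_A j = col sharp_U (sharp_sel j)" if "j < n" for j
      using that sharp_carriers sharp_sel_less[OF that] by (intro eq_vecI) (simp_all add: index_sharp_A)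
    have "set (cols sharp_A) = (\<lambda>j. col sharp_A j) ` {..<n}" using sharp_carriers by (auto simp: cols_def)
    also have "\<dots> = (\<lambda>j. col sharp_U (sharp_sel j)) ` {..<n}" using colA by auto
    also have "\<dots> = col sharp_U ` (sharp_sel ` {..<n})" by auto
    also have "sharp_sel ` {..<n} = {..<r}"
    proof
      show "sharp_sel ` {..<n} \<subseteq> {..<r}" using sharp_sel_less by auto
      show "{..<r} \<subseteq> sharp_sel ` {..<n}"
      proof
        fix k assume "k \<in> {..<r}"
        then have "k = sharp_sel k" "k < n" using rn unfolding sharp_sel_def by auto
        then show "k \<in> sharp_sel ` {..<n}" by blast
      qed
    qed
    also have "col sharp_U ` {..<r} = set (cols sharp_U)" using sharp_carriers by (auto simp: cols_def)
    finally show ?thesis .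
  qed
  then show ?thesis using rank_sharp_U sharp_carriers unfolding mrank_def vec_space.rank_def by simp
qed

lemma index_sharp_V_nonzero: "k < r \<Longrightarrow> j < m \<Longrightarrow> sharp_V $$ (k, j) \<noteq> 0"
proof -
  assume k: "k < r" and j: "j < m"
  have d: "sharp_den > 0" by (rule sharp_den_pos)
  have e: "sharp_V $$ (k, j) = (if j = k then 1 else 0) + sharp_g j" using k j by (simp add: sharp_V_def)
  show ?thesis
  proof (cases "j < r")
    case True
    show ?thesis
    proof (cases "j = k")
      case True
      have "1 + (- (real m + 1)) / sharp_den \<noteq> 0"
      proof
        assume "1 + (- (real m + 1)) / sharp_den = 0"
        then have "sharp_den = real m + 1" using d by (simp add: field_simps)
        moreover have "(real m + 2) * real r \<ge> (real m + 2) * 1"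
          using r1 by (intro mult_left_mono) auto
        ultimately show False unfolding sharp_den_def by simp
      qed
      then show ?thesis using e True \<open>j < r\<close> by (simp add: sharp_g_def)
    next
      case False
      then show ?thesis using e \<open>j < r\<close> d by (simp add: sharp_g_def)
    qed
  next
    case False
    then have "j \<noteq> k" using k by auto
    then show ?thesis using e False d by (simp add: sharp_g_def)
  qed
qed

lemma nnz_sharp_H: "nnz (sharp_Hp - sharp_Hm) = m * r"
proof -
  have "{(i, j). i < dim_row sharp_H \<and> j < dim_col sharp_H \<and> sharp_H $$ (i, j) \<noteq> 0} = {..<r} \<times> {..<m}"
    using sharp_carriers rn index_sharp_V_nonzero by (auto simp: index_sharp_H split: if_splits)
  then show ?thesis unfolding sharp_Hp_Hm nnz_def by simp
qed

lemma sharp_F_E_mult: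
  assumes D: "D \<in> carrier_mat n m" and supp: "\<And>i j. i < n \<Longrightarrow> j < m \<Longrightarrow> r \<le> i \<Longrightarrow> D $$ (i, j) = 0"
  shows "sharp_F * (sharp_E * D) = D"
proof -
  have ED: "sharp_E * D = mat r m (\<lambda>(k, j). D $$ (k, j))"
  proof (rule eq_matI)
    fix k j assume "k < dim_row (mat r m (\<lambda>(k, j). D $$ (k, j)))" "j < dim_col (mat r m (\<lambda>(k, j). D $$ (k, j)))"
    then have k: "k < r" and j: "j < m" by auto
    have "(sharp_E * D) $$ (k, j) = (\<Sum>l<n. (if k = sharp_sel l then 1 else 0) * D $$ (l, j))"
      using k j D by (simp add: sharp_E_def scalar_prod_def lessThan_atLeast0)
    also have "\<dots> = (\<Sum>l<n. if l = k then D $$ (k, j) else 0)"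
    proof (rule sum.cong[OF refl])
      fix l assume l: "l \<in> {..<n}"
      show "(if k = sharp_sel l then 1 else 0) * D $$ (l, j) = (if l = k then D $$ (k, j) else 0)"
      proof (cases "l < r")
        case True
        then show ?thesis by (auto simp: sharp_sel_def)
      next
        case False
        then show ?thesis using supp[of l j] l j k by auto
      qed
    qed
    also have "\<dots> = D $$ (k, j)" using k rn by simp
    finally show "(sharp_E * D) $$ (k, j) = mat r m (\<lambda>(k, j). D $$ (k, j)) $$ (k, j)" using k j by simp
  qed (use sharp_carriers D in auto)
  show ?thesis
  proof (rule eq_matI)
    fix i j assume "i < dim_row D" "j < dim_col D"
    then have i: "i < n" and j: "j < m" using D by auto
    have "(sharp_F * (sharp_E * D)) $$ (i, j) = (\<Sum>k<r. (if i = k then 1 else 0) * D $$ (k, j))"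
      using i j D unfolding ED by (simp add: sharp_F_def scalar_prod_def lessThan_atLeast0)
    also have "\<dots> = (\<Sum>k<r. if k = i then D $$ (i, j) else 0)" by (rule sum.cong) auto
    also have "\<dots> = D $$ (i, j)" using supp[of i j] i j by (cases "i < r") simp_all
    finally show "(sharp_F * (sharp_E * D)) $$ (i, j) = D $$ (i, j)" .
  qed (use sharp_carriers D in auto)
qed

lemma sharp_extreme_pt: "extreme_pt (feasible1 sharp_A) (sharp_Hp, sharp_Hm)"
proof (rule extreme_pt_feasible1I[OF sharp_feasible1])
  fix i j assume "i < dim_col sharp_A" "j < dim_row sharp_A"
  then show "sharp_Hp $$ (i, j) = 0 \<or> sharp_Hm $$ (i, j) = 0"
    using sharp_carriers by (simp add: sharp_Hp_def sharp_Hm_def max_def)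
next
  fix D :: "real mat"
  assume D: "D \<in> carrier_mat (dim_col sharp_A) (dim_row sharp_A)"
    and supp: "\<And>i j. i < dim_col sharp_A \<Longrightarrow> j < dim_row sharp_A \<Longrightarrow>
      sharp_Hp $$ (i, j) = 0 \<Longrightarrow> sharp_Hm $$ (i, j) = 0 \<Longrightarrow> D $$ (i, j) = 0"
    and ADA: "sharp_A * D * sharp_A = 0\<^sub>m (dim_row sharp_A) (dim_col sharp_A)"
    and AD_sym: "transpose_mat (sharp_A * D) = sharp_A * D"
  have Dc: "D \<in> carrier_mat n m" using D sharp_carriers by simp
  \<comment> \<open>\<open>(A D)\<^sup>2 = A D A D = 0\<close> with \<open>A D\<close> symmetric forces \<open>A D = 0\<close>, and \<open>D\<close>, living in the
    first \<open>r\<close> rows, is recovered from \<open>A D\<close> as \<open>H A D\<close>.\<close>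
  have "sharp_A * D * (sharp_A * D) = sharp_A * D * sharp_A * D"
    using sharp_carriers Dc by (simp add: assoc_mult_mat_dim)
  then have AD: "sharp_A * D = 0\<^sub>m m m"
    using symmetric_mat_square_eq_0[of "sharp_A * D" m] ADA AD_sym sharp_carriers Dc by simp
  have "D = sharp_F * (sharp_E * D)"
    using sharp_F_E_mult[OF Dc] supp sharp_carriers index_sharp_H
    by (simp add: sharp_Hp_def sharp_Hm_def)
  also have "\<dots> = sharp_F * (sharp_V * (sharp_U * (sharp_E * D)))"
    using sharp_carriers Dc by (simp add: sharp_V_U_mult)
  also have "\<dots> = sharp_H * (sharp_A * D)"
    unfolding sharp_H_def sharp_A_def using sharp_carriers Dc by (simp add: assoc_mult_mat_dim)
  finally show "D = 0\<^sub>m (dim_col sharp_A) (dim_row sharp_A)" using AD sharp_carriers by simp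
qed

lemma feasible1_nnz_bound_attained: "\<exists>(A::real mat) Hp Hm. A \<in> carrier_mat m n \<and> mrank A = r \<and>
   extreme_pt (feasible1 A) (Hp, Hm) \<and> nnz (Hp - Hm) = m * r"
  using sharp_carriers(5) mrank_sharp_A sharp_extreme_pt nnz_sharp_H by blast

end

theorem proposition3p1:
  shows "(\<forall>(A::real mat) Hp Hm. extreme_pt (feasible1 A) (Hp, Hm) \<longrightarrow>
            nnz (Hp - Hm) \<le> dim_row A * mrank A)
       \<and> (\<forall>m n r. m \<ge> n \<and> n \<ge> r \<and> r \<ge> 1 \<longrightarrow>
            (\<exists>(A::real mat) Hp Hm. A \<in> carrier_mat m n \<and> mrank A = r \<and>
               extreme_pt (feasible1 A) (Hp, Hm) \<and> nnz (Hp - Hm) = m * r))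
       \<and> (\<forall>(A::real mat) Hp Hm. extreme_pt (feasible2 A) (Hp, Hm) \<longrightarrow>
            nnz (Hp - Hm) \<le> dim_row A * mrank A
                 + (dim_row A - mrank A) * (dim_col A - mrank A))"
  using extreme_pt_feasible1_nnz_le feasible1_nnz_bound_attained extreme_pt_feasible2_nnz_le
  by blast

end
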